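(* Let $G$ be the central product of normal subgroups $H,K$ ($G=HK$, $[H,K]=1$), $A=H\cap K$, $D$ a divisible abelian group with trivial action. Let $\theta':\operatorname{H}^2(G,D)\to \operatorname{H}^2(H,D)\oplus\operatorname{H}^2(K,D)\oplus\operatorname{Hom}(H\otimes K,D)$ and $\theta:\operatorname{H}^2(G/A,D)\to \operatorname{H}^2(H/A,D)\oplus\operatorname{H}^2(K/A,D)\oplus\operatorname{Hom}(H/A\otimes K/A,D)$ be as defined in the context ($\theta$ is an isomorphism). Let $(\operatorname{tra},\operatorname{tra},0):\operatorname{Hom}(A\cap H',D)\oplus\operatorname{Hom}(A\cap K',D)\to \operatorname{H}^2(H/A,D)\oplus\operatorname{H}^2(K/A,D)\oplus\operatorname{Hom}(H/A\otimes K/A,D)$, where the first $\operatorname{tra}$ is the transgression for the central extension $1\to A\to H\to H/A\to 1$ restricted to $\operatorname{Hom}(A\cap H',D)$ and the second is the transgression for $1\to A\to K\to K/A\to 1$ restricted to $\operatorname{Hom}(A\cap K',D)$. Then $$\operatorname{Ker}(\theta')=\{\inf(\eta)\mid \eta\in \theta^{-1}(\operatorname{Im}(\operatorname{tra},\operatorname{tra},0))\},$$ where $\inf:\operatorname{H}^2(G/A,D)\to\operatorname{H}^2(G,D)$ is inflation.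
   Context: $X\otimes Y$ denotes the abelian tensor product $X/X'\otimes_{\mathbb{Z}}Y/Y'$. Cohomology classes are represented by 2-cocycles with values in $D$ (written additively). The map $\theta'=(\operatorname{res}^G_H,\operatorname{res}^G_K,\nu)$, where for $\xi\in\operatorname{H}^2(G,D)$ represented by a 2-cocycle $f$, $\nu(\xi)\in\operatorname{Hom}(H\otimes K,D)$ is given by $\nu(\xi)(hH'\otimes kK')=f(h,k)-f(k,h)$ for $h\in H,k\in K$. Similarly, with $\bar G=G/A$, $\bar H=H/A$, $\bar K=K/A$, $\theta=(\operatorname{res}^{\bar G}_{\bar H},\operatorname{res}^{\bar G}_{\bar K},\nu_1)$ with $\nu_1(\xi)(h\bar H'\otimes k\bar K')=f(h,k)-f(k,h)$ for $h\in\bar H,k\in\bar K$; since $\bar H\cap\bar K=1$, $\theta$ is an isomorphism. *)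

theory Defs
  imports "HOL-Algebra.Algebra"
begin

text \<open>Second cohomology with coefficients in an abelian group D (the type 'd), trivial action,
  via normalised-support 2-cocycles: functions vanishing outside carrier x carrier.\<close>

definition divisible_ab :: "('d::ab_group_add) itself \<Rightarrow> bool" where
  "divisible_ab _ \<longleftrightarrow> (\<forall>y::'d. \<forall>n::nat. n > 0 \<longrightarrow> (\<exists>x. (\<Sum>i<n. x) = y))"

definition cocycles2 :: "('g,'m) monoid_scheme \<Rightarrow> ('g \<Rightarrow> 'g \<Rightarrow> 'd::ab_group_add) set" where
  "cocycles2 G = {f. (\<forall>x y. x \<notin> carrier G \<or> y \<notin> carrier G \<longrightarrow> f x y = 0) \<and>
     (\<forall>x\<in>carrier G. \<forall>y\<in>carrier G. \<forall>z\<in>carrier G.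
        f x y + f (x \<otimes>\<^bsub>G\<^esub> y) z = f y z + f x (y \<otimes>\<^bsub>G\<^esub> z))}"

definition cohom_rel :: "('g,'m) monoid_scheme \<Rightarrow> (('g \<Rightarrow> 'g \<Rightarrow> 'd::ab_group_add) \<times> ('g \<Rightarrow> 'g \<Rightarrow> 'd)) set" where
  "cohom_rel G = {(f, g). f \<in> cocycles2 G \<and> g \<in> cocycles2 G \<and>
     (\<exists>c::'g \<Rightarrow> 'd. \<forall>x\<in>carrier G. \<forall>y\<in>carrier G.
        f x y - g x y = c y - c (x \<otimes>\<^bsub>G\<^esub> y) + c x)}"

definition H2 :: "('g,'m) monoid_scheme \<Rightarrow> ('g \<Rightarrow> 'g \<Rightarrow> 'd::ab_group_add) set set" where
  "H2 G = cocycles2 G // cohom_rel G"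

definition cls :: "('g,'m) monoid_scheme \<Rightarrow> ('g \<Rightarrow> 'g \<Rightarrow> 'd::ab_group_add) \<Rightarrow> ('g \<Rightarrow> 'g \<Rightarrow> 'd) set" where
  "cls G f = cohom_rel G `` {f}"

definition rep :: "('g \<Rightarrow> 'g \<Rightarrow> 'd) set \<Rightarrow> ('g \<Rightarrow> 'g \<Rightarrow> 'd)" where
  "rep \<xi> = (SOME f. f \<in> \<xi>)"

definition res2 :: "('g,'m) monoid_scheme \<Rightarrow> ('g \<Rightarrow> 'g \<Rightarrow> 'd::ab_group_add) set \<Rightarrow> ('g \<Rightarrow> 'g \<Rightarrow> 'd) set" where
  "res2 T \<xi> = cls T (\<lambda>x y. if x \<in> carrier T \<and> y \<in> carrier T then rep \<xi> x y else 0)"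

text \<open>\<nu>(\<xi>)(h,k) = f(h,k) - f(k,h). An element of Hom(H\<otimes>K,D) is represented by the
  corresponding biadditive map H \<times> K \<rightarrow> D (zero outside H \<times> K).\<close>
definition nu :: "'g set \<Rightarrow> 'g set \<Rightarrow> ('g \<Rightarrow> 'g \<Rightarrow> 'd::ab_group_add) set \<Rightarrow> ('g \<Rightarrow> 'g \<Rightarrow> 'd)" where
  "nu H K \<xi> = (\<lambda>h k. if h \<in> H \<and> k \<in> K then rep \<xi> h k - rep \<xi> k h else 0)"

definition theta3 :: "('g,'m) monoid_scheme \<Rightarrow> ('g,'m) monoid_scheme \<Rightarrow> ('g \<Rightarrow> 'g \<Rightarrow> 'd::ab_group_add) set
     \<Rightarrow> ('g \<Rightarrow> 'g \<Rightarrow> 'd) set \<times> ('g \<Rightarrow> 'g \<Rightarrow> 'd) set \<times> ('g \<Rightarrow> 'g \<Rightarrow> 'd)" where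
  "theta3 GH GK \<xi> = (res2 GH \<xi>, res2 GK \<xi>, nu (carrier GH) (carrier GK) \<xi>)"

definition infl :: "('a,'m) monoid_scheme \<Rightarrow> 'a set \<Rightarrow> ('a set \<Rightarrow> 'a set \<Rightarrow> 'd::ab_group_add) set \<Rightarrow> ('a \<Rightarrow> 'a \<Rightarrow> 'd) set" where
  "infl G A \<eta> = cls G (\<lambda>x y. if x \<in> carrier G \<and> y \<in> carrier G
        then rep \<eta> (A #>\<^bsub>G\<^esub> x) (A #>\<^bsub>G\<^esub> y) else 0)"

definition addhom :: "('a,'m) monoid_scheme \<Rightarrow> 'a set \<Rightarrow> ('a \<Rightarrow> 'd::ab_group_add) \<Rightarrow> bool" where
  "addhom E S \<psi> \<longleftrightarrow> (\<forall>a\<in>S. \<forall>b\<in>S. \<psi> (a \<otimes>\<^bsub>E\<^esub> b) = \<psi> a + \<psi> b)"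

definition transv :: "'a set \<Rightarrow> 'a" where
  "transv S = (SOME a. a \<in> S)"

text \<open>transgression Hom(A,D) \<rightarrow> H^2(E/A,D) for a central extension 1 \<rightarrow> A \<rightarrow> E \<rightarrow> E/A \<rightarrow> 1:
  with a transversal s, tra(\<psi>) is the class of (x,y) \<mapsto> \<psi>(s(x) s(y) s(xy)^{-1}).\<close>
definition tra :: "('a,'m) monoid_scheme \<Rightarrow> 'a set \<Rightarrow> ('a \<Rightarrow> 'd::ab_group_add) \<Rightarrow> ('a set \<Rightarrow> 'a set \<Rightarrow> 'd) set" where
  "tra E A \<psi> =
     cls (E Mod A) (\<lambda>U V. if U \<in> carrier (E Mod A) \<and> V \<in> carrier (E Mod A)
        then \<psi> (transv U \<otimes>\<^bsub>E\<^esub> transv V \<otimes>\<^bsub>E\<^esub> inv\<^bsub>E\<^esub> (transv (U <#>\<^bsub>E\<^esub> V))) else 0)"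

text \<open>transgression restricted to Hom(A \<inter> E', D): \<phi> is sent to tra of an extension of \<phi>
  to a homomorphism A \<rightarrow> D (such extensions exist since D is divisible).\<close>
definition tra_res :: "('a,'m) monoid_scheme \<Rightarrow> 'a set \<Rightarrow> ('a \<Rightarrow> 'd::ab_group_add) \<Rightarrow> ('a set \<Rightarrow> 'a set \<Rightarrow> 'd) set" where
  "tra_res E A \<phi> = tra E A (SOME \<psi>. addhom E A \<psi> \<and>
       (\<forall>a \<in> A \<inter> derived E (carrier E). \<psi> a = \<phi> a))"

definition tra_res_image :: "('a,'m) monoid_scheme \<Rightarrow> 'a set \<Rightarrow> ('a set \<Rightarrow> 'a set \<Rightarrow> 'd::ab_group_add) set set" where
  "tra_res_image E A = tra_res E A ` {\<phi>. addhom E (A \<inter> derived E (carrier E)) \<phi>}"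

end

theory Submission
  imports Defs
begin

text \<open>
  Write A = H \<inter> K; it is central in G. If \<xi> lies in the kernel of \<theta>', a representative f can be
  normalised to vanish on H \<times> H, to be a coboundary \<delta>c on K \<times> K and to be symmetric on H \<times> K.
  Then f is symmetric on A \<times> G, and subtracting a suitable coboundary makes it constant on A-cosets:
  it descends to a cocycle F on G/A with infl [F] = \<xi>. On H/A and on K/A, F differs by a coboundary
  from a transgression cochain; the coboundary is built from an extension to H (resp. K) of a
  homomorphism defined on A, and such extensions exist because D is divisible (Zorn's lemma on
  graphs of partial homomorphisms). Conversely, pulled back to G a transgression cochain is a
  coboundary, so inflation kills classes whose restrictions are transgressions, and \<nu> commutes
  with inflation.
\<close>

lemma cocycles2I:
  assumes "\<And>x y. x \<notin> carrier G \<or> y \<notin> carrier G \<Longrightarrow> f x y = 0"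
    and "\<And>x y z. x \<in> carrier G \<Longrightarrow> y \<in> carrier G \<Longrightarrow> z \<in> carrier G \<Longrightarrow>
        f x y + f (x \<otimes>\<^bsub>G\<^esub> y) z = f y z + f x (y \<otimes>\<^bsub>G\<^esub> z)"
  shows "f \<in> cocycles2 G"
  using assms unfolding cocycles2_def by blast

lemma cocycles2D:
  "f \<in> cocycles2 G \<Longrightarrow> x \<in> carrier G \<Longrightarrow> y \<in> carrier G \<Longrightarrow> z \<in> carrier G \<Longrightarrow>
     f x y + f (x \<otimes>\<^bsub>G\<^esub> y) z = f y z + f x (y \<otimes>\<^bsub>G\<^esub> z)"
  unfolding cocycles2_def by blast

lemma zero_in_cocycles2: "(\<lambda>_ _. 0) \<in> cocycles2 G"
  by (rule cocycles2I) auto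

lemma cohom_relI:
  "f \<in> cocycles2 G \<Longrightarrow> g \<in> cocycles2 G \<Longrightarrow>
   (\<And>x y. x \<in> carrier G \<Longrightarrow> y \<in> carrier G \<Longrightarrow> f x y - g x y = c y - c (x \<otimes>\<^bsub>G\<^esub> y) + c x)
   \<Longrightarrow> (f, g) \<in> cohom_rel G"
  unfolding cohom_rel_def by blast

lemma cohom_relE:
  assumes "(f, g) \<in> cohom_rel G"
  obtains c where "f \<in> cocycles2 G" "g \<in> cocycles2 G"
    "\<And>x y. x \<in> carrier G \<Longrightarrow> y \<in> carrier G \<Longrightarrow> f x y - g x y = c y - c (x \<otimes>\<^bsub>G\<^esub> y) + c x"
  using assms unfolding cohom_rel_def by blast

lemma equiv_cohom_rel: "equiv (cocycles2 G) (cohom_rel G)"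
proof (rule equivI)
  show "cohom_rel G \<subseteq> cocycles2 G \<times> cocycles2 G"
    by (auto elim: cohom_relE)
  show "refl_on (cocycles2 G) (cohom_rel G)"
    unfolding refl_on_def by (auto intro: cohom_relI[where c = "\<lambda>_. 0"] elim: cohom_relE)
  show "sym (cohom_rel G)"
  proof (rule symI)
    fix f g assume "(f, g) \<in> cohom_rel G"
    then obtain c where "f \<in> cocycles2 G" "g \<in> cocycles2 G"
      and c: "\<And>x y. x \<in> carrier G \<Longrightarrow> y \<in> carrier G \<Longrightarrow> f x y - g x y = c y - c (x \<otimes>\<^bsub>G\<^esub> y) + c x"
      by (metis cohom_relE)
    then show "(g, f) \<in> cohom_rel G"
      by (intro cohom_relI[where c = "\<lambda>z. - c z"]) (auto simp: algebra_simps dest!: c)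
  qed
  show "trans (cohom_rel G)"
  proof (rule transI)
    fix f g h assume "(f, g) \<in> cohom_rel G" "(g, h) \<in> cohom_rel G"
    then obtain c d where "f \<in> cocycles2 G" "h \<in> cocycles2 G"
      and c: "\<And>x y. x \<in> carrier G \<Longrightarrow> y \<in> carrier G \<Longrightarrow> f x y - g x y = c y - c (x \<otimes>\<^bsub>G\<^esub> y) + c x"
      and d: "\<And>x y. x \<in> carrier G \<Longrightarrow> y \<in> carrier G \<Longrightarrow> g x y - h x y = d y - d (x \<otimes>\<^bsub>G\<^esub> y) + d x"
      by (metis cohom_relE)
    show "(f, h) \<in> cohom_rel G"
    proof (rule cohom_relI[where c = "\<lambda>z. c z + d z"])
      fix x y assume "x \<in> carrier G" "y \<in> carrier G"
      then have "f x y - h x y = (c y - c (x \<otimes>\<^bsub>G\<^esub> y) + c x) + (d y - d (x \<otimes>\<^bsub>G\<^esub> y) + d x)"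
      proof -
        have "f x y - h x y = (f x y - g x y) + (g x y - h x y)" by simp
        then show ?thesis using c[of x y] d[of x y] \<open>x \<in> carrier G\<close> \<open>y \<in> carrier G\<close> by simp
      qed
      then show "f x y - h x y = (\<lambda>z. c z + d z) y - (\<lambda>z. c z + d z) (x \<otimes>\<^bsub>G\<^esub> y) + (\<lambda>z. c z + d z) x"
        by (simp add: algebra_simps)
    qed fact+
  qed
qed

lemma cls_in_H2: "f \<in> cocycles2 G \<Longrightarrow> cls G f \<in> H2 G"
  unfolding cls_def H2_def by (rule quotientI)

lemma cls_self: "f \<in> cocycles2 G \<Longrightarrow> f \<in> cls G f"
  unfolding cls_def using equiv_cohom_rel[of G] by (auto simp: equiv_def refl_on_def)

lemma cls_eqI: "(f, g) \<in> cohom_rel G \<Longrightarrow> cls G f = cls G g"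
  unfolding cls_def using equiv_cohom_rel by (metis equiv_class_eq)

lemma cohom_rel_of_mem_cls: "g \<in> cls G f \<Longrightarrow> (g, f) \<in> cohom_rel G"
  unfolding cls_def using equiv_cohom_rel[of G] by (auto simp: equiv_def sym_def)

lemma cls_eqD: "f \<in> cocycles2 G \<Longrightarrow> cls G f = cls G g \<Longrightarrow> (f, g) \<in> cohom_rel G"
  using cls_self cohom_rel_of_mem_cls by fastforce

lemma H2_cls_eq: "\<xi> \<in> H2 G \<Longrightarrow> f \<in> \<xi> \<Longrightarrow> \<xi> = cls G f"
  unfolding H2_def cls_def using equiv_cohom_rel by (metis Image_singleton_iff equiv_class_eq quotientE)

lemma H2_mem_cohom_rel:
  assumes "\<xi> \<in> H2 G" "f \<in> \<xi>" "g \<in> \<xi>"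
  shows "(f, g) \<in> cohom_rel G"
proof -
  have "f \<in> cls G g" using assms H2_cls_eq[OF assms(1,3)] by simp
  then show ?thesis by (rule cohom_rel_of_mem_cls)
qed

lemma H2_mem_cocycles2: "\<xi> \<in> H2 G \<Longrightarrow> f \<in> \<xi> \<Longrightarrow> f \<in> cocycles2 G"
  using H2_mem_cohom_rel by (blast elim: cohom_relE)

lemma H2_rep:
  assumes "\<xi> \<in> H2 G"
  shows "rep \<xi> \<in> \<xi>" "rep \<xi> \<in> cocycles2 G" "\<xi> = cls G (rep \<xi>)"
proof -
  obtain f where f: "f \<in> cocycles2 G" "\<xi> = cls G f"
    using assms unfolding H2_def cls_def by (auto elim: quotientE)
  then show "rep \<xi> \<in> \<xi>" unfolding rep_def by (metis cls_self someI)
  then show "\<xi> = cls G (rep \<xi>)" by (rule H2_cls_eq[OF assms])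
  show "rep \<xi> \<in> cocycles2 G" by (rule H2_mem_cocycles2[OF assms \<open>rep \<xi> \<in> \<xi>\<close>])
qed

lemma cohom_rel_commuting_antisym:
  assumes "(f, g) \<in> cohom_rel G" "x \<in> carrier G" "y \<in> carrier G" "x \<otimes>\<^bsub>G\<^esub> y = y \<otimes>\<^bsub>G\<^esub> x"
  shows "f x y - f y x = g x y - g y x"
proof -
  obtain c where c: "\<And>x y. x \<in> carrier G \<Longrightarrow> y \<in> carrier G \<Longrightarrow> f x y - g x y = c y - c (x \<otimes>\<^bsub>G\<^esub> y) + c x"
    using assms(1) by (metis cohom_relE)
  have "(f x y - g x y) - (f y x - g y x) = 0"
    using c[OF assms(2,3)] c[OF assms(3,2)] assms(4) by simp
  then show ?thesis by (simp add: algebra_simps)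
qed

definition restr :: "'g set \<Rightarrow> ('g \<Rightarrow> 'g \<Rightarrow> 'd::zero) \<Rightarrow> 'g \<Rightarrow> 'g \<Rightarrow> 'd" where
  "restr S f x y = (if x \<in> S \<and> y \<in> S then f x y else 0)"

definition pullback2 :: "('g, 'm) monoid_scheme \<Rightarrow> ('g \<Rightarrow> 'q) \<Rightarrow> ('q \<Rightarrow> 'q \<Rightarrow> 'd::zero) \<Rightarrow> 'g \<Rightarrow> 'g \<Rightarrow> 'd" where
  "pullback2 G p F x y = (if x \<in> carrier G \<and> y \<in> carrier G then F (p x) (p y) else 0)"

definition minus_cobound ::
    "('g, 'm) monoid_scheme \<Rightarrow> ('g \<Rightarrow> 'g \<Rightarrow> 'd::ab_group_add) \<Rightarrow> ('g \<Rightarrow> 'd) \<Rightarrow> 'g \<Rightarrow> 'g \<Rightarrow> 'd" where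
  "minus_cobound G f c x y =
     (if x \<in> carrier G \<and> y \<in> carrier G then f x y - (c y - c (x \<otimes>\<^bsub>G\<^esub> y) + c x) else 0)"

lemma minus_cobound_commuting_antisym:
  "x \<in> carrier G \<Longrightarrow> y \<in> carrier G \<Longrightarrow> x \<otimes>\<^bsub>G\<^esub> y = y \<otimes>\<^bsub>G\<^esub> x \<Longrightarrow>
   minus_cobound G f c x y - minus_cobound G f c y x = f x y - f y x"
  unfolding minus_cobound_def by (simp add: algebra_simps)

context monoid
begin

lemma minus_cobound_in_cocycles2:
  assumes f: "f \<in> cocycles2 G"
  shows "minus_cobound G f c \<in> cocycles2 G"
proof (rule cocycles2I)
  fix x y z assume xyz: "x \<in> carrier G" "y \<in> carrier G" "z \<in> carrier G"
  have "minus_cobound G f c x y + minus_cobound G f c (x \<otimes> y) z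
        - (minus_cobound G f c y z + minus_cobound G f c x (y \<otimes> z))
      = (f x y + f (x \<otimes> y) z) - (f y z + f x (y \<otimes> z)) + (c (x \<otimes> y \<otimes> z) - c (x \<otimes> (y \<otimes> z)))"
    unfolding minus_cobound_def using xyz by (simp add: algebra_simps)
  also have "\<dots> = 0"
    using cocycles2D[OF f xyz] xyz by (simp add: m_assoc)
  finally show "minus_cobound G f c x y + minus_cobound G f c (x \<otimes> y) z
      = minus_cobound G f c y z + minus_cobound G f c x (y \<otimes> z)"
    by simp
qed (auto simp: minus_cobound_def)

lemma cohom_rel_minus_cobound: "f \<in> cocycles2 G \<Longrightarrow> (f, minus_cobound G f c) \<in> cohom_rel G"
  by (rule cohom_relI[where c = c]) (auto simp: minus_cobound_in_cocycles2 minus_cobound_def)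

end

context group
begin

lemma restr_in_cocycles2:
  assumes f: "f \<in> cocycles2 G" and S: "subgroup S G"
  shows "restr S f \<in> cocycles2 (G\<lparr>carrier := S\<rparr>)"
proof (rule cocycles2I)
  fix x y z assume "x \<in> carrier (G\<lparr>carrier := S\<rparr>)" "y \<in> carrier (G\<lparr>carrier := S\<rparr>)"
    "z \<in> carrier (G\<lparr>carrier := S\<rparr>)"
  with S show "restr S f x y + restr S f (x \<otimes>\<^bsub>G\<lparr>carrier := S\<rparr>\<^esub> y) z
      = restr S f y z + restr S f x (y \<otimes>\<^bsub>G\<lparr>carrier := S\<rparr>\<^esub> z)"
    using cocycles2D[OF f] subgroup.subset[OF S] subgroup.m_closed[OF S]
    unfolding restr_def by (simp add: subset_iff)
qed (auto simp: restr_def)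

lemma cohom_rel_restr:
  assumes fg: "(f, g) \<in> cohom_rel G" and S: "subgroup S G"
  shows "(restr S f, restr S g) \<in> cohom_rel (G\<lparr>carrier := S\<rparr>)"
proof -
  obtain c where "f \<in> cocycles2 G" "g \<in> cocycles2 G"
    and c: "\<And>x y. x \<in> carrier G \<Longrightarrow> y \<in> carrier G \<Longrightarrow> f x y - g x y = c y - c (x \<otimes> y) + c x"
    using fg by (metis cohom_relE)
  show ?thesis
  proof (rule cohom_relI[where c = c])
    fix x y assume "x \<in> carrier (G\<lparr>carrier := S\<rparr>)" "y \<in> carrier (G\<lparr>carrier := S\<rparr>)"
    then show "restr S f x y - restr S g x y = c y - c (x \<otimes>\<^bsub>G\<lparr>carrier := S\<rparr>\<^esub> y) + c x"
      using c subgroup.subset[OF S] unfolding restr_def by auto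
  qed (use restr_in_cocycles2 S \<open>f \<in> _\<close> \<open>g \<in> _\<close> in auto)
qed

lemma res2_eq_cls_restr:
  assumes "\<xi> \<in> H2 G" "f \<in> \<xi>" "subgroup S G"
  shows "res2 (G\<lparr>carrier := S\<rparr>) \<xi> = cls (G\<lparr>carrier := S\<rparr>) (restr S f)"
proof -
  have "(rep \<xi>, f) \<in> cohom_rel G"
    using assms H2_rep(1) H2_mem_cohom_rel by blast
  have "res2 (G\<lparr>carrier := S\<rparr>) \<xi> = cls (G\<lparr>carrier := S\<rparr>) (restr S (rep \<xi>))"
    by (simp add: res2_def restr_def[abs_def])
  also have "\<dots> = cls (G\<lparr>carrier := S\<rparr>) (restr S f)"
    by (rule cls_eqI[OF cohom_rel_restr[OF \<open>(rep \<xi>, f) \<in> _\<close> assms(3)]])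
  finally show ?thesis .
qed

lemma res2_eq_zero_iff:
  assumes "\<xi> \<in> H2 G" "f \<in> \<xi>" "subgroup S G"
  shows "res2 (G\<lparr>carrier := S\<rparr>) \<xi> = cls (G\<lparr>carrier := S\<rparr>) (\<lambda>_ _. 0)
     \<longleftrightarrow> (\<exists>c. \<forall>x\<in>S. \<forall>y\<in>S. f x y = c y - c (x \<otimes> y) + c x)"
proof -
  have f: "f \<in> cocycles2 G" by (rule H2_mem_cocycles2[OF assms(1,2)])
  have "res2 (G\<lparr>carrier := S\<rparr>) \<xi> = cls (G\<lparr>carrier := S\<rparr>) (\<lambda>_ _. 0)
     \<longleftrightarrow> (restr S f, \<lambda>_ _. 0) \<in> cohom_rel (G\<lparr>carrier := S\<rparr>)"
    unfolding res2_eq_cls_restr[OF assms]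
    using cls_eqD cls_eqI restr_in_cocycles2[OF f assms(3)] by metis
  also have "\<dots> \<longleftrightarrow> (\<exists>c. \<forall>x\<in>S. \<forall>y\<in>S. f x y = c y - c (x \<otimes> y) + c x)"
    using restr_in_cocycles2[OF f assms(3)] zero_in_cocycles2
    unfolding cohom_rel_def restr_def by auto
  finally show ?thesis .
qed

lemma pullback2_in_cocycles2:
  assumes p: "p \<in> hom G Q" and F: "F \<in> cocycles2 Q"
  shows "pullback2 G p F \<in> cocycles2 G"
proof (rule cocycles2I)
  fix x y z assume "x \<in> carrier G" "y \<in> carrier G" "z \<in> carrier G"
  then show "pullback2 G p F x y + pullback2 G p F (x \<otimes> y) z
      = pullback2 G p F y z + pullback2 G p F x (y \<otimes> z)"
    using p cocycles2D[OF F] unfolding pullback2_def hom_def by auto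
qed (auto simp: pullback2_def)

lemma cohom_rel_pullback2:
  assumes p: "p \<in> hom G Q" and FF: "(F1, F2) \<in> cohom_rel Q"
  shows "(pullback2 G p F1, pullback2 G p F2) \<in> cohom_rel G"
proof -
  obtain c where "F1 \<in> cocycles2 Q" "F2 \<in> cocycles2 Q"
    and c: "\<And>x y. x \<in> carrier Q \<Longrightarrow> y \<in> carrier Q \<Longrightarrow> F1 x y - F2 x y = c y - c (x \<otimes>\<^bsub>Q\<^esub> y) + c x"
    using FF by (metis cohom_relE)
  show ?thesis
  proof (rule cohom_relI[where c = "\<lambda>x. c (p x)"])
    fix x y assume "x \<in> carrier G" "y \<in> carrier G"
    then show "pullback2 G p F1 x y - pullback2 G p F2 x y = c (p y) - c (p (x \<otimes> y)) + c (p x)"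
      using c p unfolding pullback2_def hom_def by auto
  qed (use pullback2_in_cocycles2 p \<open>F1 \<in> _\<close> \<open>F2 \<in> _\<close> in auto)
qed

end

lemma (in normal) infl_eq_cls_pullback2:
  assumes "\<eta> \<in> H2 (G Mod H)" "F \<in> \<eta>"
  shows "infl G H \<eta> = cls G (pullback2 G (\<lambda>x. H #> x) F)"
proof -
  have "(rep \<eta>, F) \<in> cohom_rel (G Mod H)"
    using assms H2_rep(1) H2_mem_cohom_rel by blast
  have "infl G H \<eta> = cls G (pullback2 G (\<lambda>x. H #> x) (rep \<eta>))"
    by (simp add: infl_def pullback2_def[abs_def])
  also have "\<dots> = cls G (pullback2 G (\<lambda>x. H #> x) F)"
    by (rule cls_eqI[OF cohom_rel_pullback2[OF r_coset_hom_Mod \<open>(rep \<eta>, F) \<in> _\<close>]])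
  finally show ?thesis .
qed

lemma (in normal) infl_in_H2: "\<eta> \<in> H2 (G Mod H) \<Longrightarrow> infl G H \<eta> \<in> H2 G"
  using infl_eq_cls_pullback2 H2_rep cls_in_H2 pullback2_in_cocycles2[OF r_coset_hom_Mod] by metis

definition additive_group :: "'d::ab_group_add monoid" where
  "additive_group = \<lparr>carrier = UNIV, monoid.mult = (+), monoid.one = 0\<rparr>"

lemma additive_group_simps [simp]:
  "carrier additive_group = UNIV" "x \<otimes>\<^bsub>additive_group\<^esub> y = x + y" "\<one>\<^bsub>additive_group\<^esub> = 0"
  by (simp_all add: additive_group_def)

lemma group_additive_group: "group (additive_group :: 'd::ab_group_add monoid)"
  by (rule groupI) (auto simp: algebra_simps intro: exI[of _ "- x" for x])

lemma inv_additive_group [simp]: "inv\<^bsub>additive_group\<^esub> (x::'d::ab_group_add) = - x"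
  using group.inv_equality[OF group_additive_group, of "- x" x] by simp

definition int_multiple :: "int \<Rightarrow> 'd::ab_group_add \<Rightarrow> 'd" where
  "int_multiple n d = d [^]\<^bsub>additive_group\<^esub> n"

lemma int_multiple_0 [simp]: "int_multiple 0 d = 0"
  unfolding int_multiple_def by simp

lemma int_multiple_1 [simp]: "int_multiple 1 d = d"
  unfolding int_multiple_def using group.int_pow_1[OF group_additive_group] by simp

lemma int_multiple_add: "int_multiple (m + n) d = int_multiple m d + int_multiple n d"
  unfolding int_multiple_def using group.int_pow_mult[OF group_additive_group] by simp

lemma int_multiple_minus: "int_multiple (- n) d = - int_multiple n d"
  unfolding int_multiple_def using group.int_pow_neg[OF group_additive_group] by simp

lemma int_multiple_diff: "int_multiple (m - n) d = int_multiple m d - int_multiple n d"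
  using int_multiple_add[of m "- n" d] int_multiple_minus[of n d] by simp

lemma int_multiple_mult: "int_multiple (m * n) d = int_multiple n (int_multiple m d)"
  unfolding int_multiple_def using group.int_pow_pow[OF group_additive_group, of d m n] by simp

lemma int_multiple_of_nat: "int_multiple (int n) d = (\<Sum>i<n. d)"
  unfolding int_multiple_def int_pow_int by (induction n) simp_all

lemma divisible_ab_int_multiple:
  "divisible_ab TYPE('d::ab_group_add) \<Longrightarrow> n > 0 \<Longrightarrow> \<exists>x::'d. int_multiple (int n) x = y"
  unfolding divisible_ab_def int_multiple_of_nat by blast

context group
begin

lemma mult_inv_cancel_left [simp]: "x \<in> carrier G \<Longrightarrow> y \<in> carrier G \<Longrightarrow> x \<otimes> (inv x \<otimes> y) = y"
  by (simp add: m_assoc[symmetric])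

lemma inv_mult_cancel_left [simp]: "x \<in> carrier G \<Longrightarrow> y \<in> carrier G \<Longrightarrow> inv x \<otimes> (x \<otimes> y) = y"
  by (simp add: m_assoc[symmetric])

lemma inv_mult_eq_mult_inv:
  assumes "a \<in> carrier G" "b \<in> carrier G" "c \<in> carrier G" "e \<in> carrier G" "a \<otimes> b = c \<otimes> e"
  shows "inv c \<otimes> a = e \<otimes> inv b"
proof -
  have "inv c \<otimes> a = inv c \<otimes> (a \<otimes> b) \<otimes> inv b" using assms(1-4) by (simp add: m_assoc)
  also have "\<dots> = e \<otimes> inv b" using assms by (simp add: m_assoc[symmetric])
  finally show ?thesis .
qed

lemma addhom_one:
  assumes "subgroup B G" "addhom G B \<psi>"
  shows "\<psi> \<one> = 0"
proof -
  have "\<one> \<in> B" by (rule subgroup.one_closed[OF assms(1)])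
  then have "\<psi> (\<one> \<otimes> \<one>) = \<psi> \<one> + \<psi> \<one>" using assms(2) unfolding addhom_def by blast
  then show ?thesis by simp
qed

lemma addhom_inv:
  assumes "subgroup B G" "addhom G B \<psi>" "b \<in> B"
  shows "\<psi> (inv b) = - \<psi> b"
proof -
  have "\<psi> (b \<otimes> inv b) = \<psi> b + \<psi> (inv b)"
    using assms(2,3) subgroup.m_inv_closed[OF assms(1,3)] unfolding addhom_def by blast
  moreover have "b \<otimes> inv b = \<one>" using subgroup.mem_carrier[OF assms(1,3)] by simp
  ultimately have "\<psi> b + \<psi> (inv b) = 0" using addhom_one[OF assms(1,2)] by simp
  then show ?thesis by (simp add: eq_neg_iff_add_eq_0 add.commute)
qed

end

locale hom_extension = group G for G (structure) +
  fixes S B :: "'a set" and \<beta> :: "'a \<Rightarrow> 'd::ab_group_add"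
  assumes subgroup_S: "subgroup S G" and subgroup_B: "subgroup B G" and B_subset: "B \<subseteq> S"
    and \<beta>_mult: "\<And>x y. x \<in> B \<Longrightarrow> y \<in> B \<Longrightarrow> \<beta> (x \<otimes> y) = \<beta> x + \<beta> y"
    and \<beta>_derived: "\<And>w. w \<in> B \<Longrightarrow> w \<in> derived G S \<Longrightarrow> \<beta> w = 0"
begin

text \<open>Graphs of homomorphisms into the coefficients that are defined on a subgroup of S,
  extend \<beta> and kill the derived subgroup of S; Zorn's lemma yields a maximal one,
  and divisibility makes it total.\<close>
definition ext_graph :: "('a \<times> 'd) set \<Rightarrow> bool" where
  "ext_graph R \<longleftrightarrow> R \<subseteq> S \<times> UNIV
     \<and> (\<forall>x u v. (x, u) \<in> R \<longrightarrow> (x, v) \<in> R \<longrightarrow> u = v)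
     \<and> (\<forall>x u y v. (x, u) \<in> R \<longrightarrow> (y, v) \<in> R \<longrightarrow> (x \<otimes> y, u + v) \<in> R)
     \<and> (\<forall>x u. (x, u) \<in> R \<longrightarrow> (inv x, - u) \<in> R)
     \<and> (\<forall>b\<in>B. (b, \<beta> b) \<in> R) \<and> (\<forall>w\<in>derived G S. (w, 0) \<in> R)"

lemma ext_graphD:
  assumes "ext_graph R"
  shows "(x, u) \<in> R \<Longrightarrow> x \<in> S"
    and "(x, u) \<in> R \<Longrightarrow> (x, v) \<in> R \<Longrightarrow> u = v"
    and "(x, u) \<in> R \<Longrightarrow> (y, v) \<in> R \<Longrightarrow> (x \<otimes> y, u + v) \<in> R"
    and "(x, u) \<in> R \<Longrightarrow> (inv x, - u) \<in> R"
    and "b \<in> B \<Longrightarrow> (b, \<beta> b) \<in> R"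
    and "w \<in> derived G S \<Longrightarrow> (w, 0) \<in> R"
  using assms unfolding ext_graph_def by blast+

lemma S_carrier: "x \<in> S \<Longrightarrow> x \<in> carrier G"
  using subgroup.subset[OF subgroup_S] by blast

lemma derived_subgroup: "subgroup (derived G S) G"
  using derived_is_subgroup subgroup.subset[OF subgroup_S] by blast

lemma derived_subset: "derived G S \<subseteq> S"
  using derived_incl[OF _ subgroup_S] by blast

lemma commutator_in_derived: "x \<in> S \<Longrightarrow> y \<in> S \<Longrightarrow> x \<otimes> y \<otimes> inv x \<otimes> inv y \<in> derived G S"
  unfolding derived_def by (auto intro!: generate.incl)

lemma conj_in_derived:
  assumes "x \<in> S" "w \<in> derived G S"
  shows "x \<otimes> w \<otimes> inv x \<in> derived G S"
proof -
  have "w \<in> S" using assms(2) derived_subset by blast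
  then have "x \<otimes> w \<otimes> inv x = (x \<otimes> w \<otimes> inv x \<otimes> inv w) \<otimes> w"
    using assms(1) S_carrier by (simp add: m_assoc)
  then show ?thesis
    using subgroup.m_closed[OF derived_subgroup] commutator_in_derived assms \<open>w \<in> S\<close> by metis
qed

lemma \<beta>_inv: "b \<in> B \<Longrightarrow> \<beta> (inv b) = - \<beta> b"
  by (rule addhom_inv[OF subgroup_B]) (simp_all add: addhom_def \<beta>_mult)

lemma \<beta>_derived_coset:
  assumes "b \<in> B" "w \<in> derived G S" "b' \<in> B" "w' \<in> derived G S" "b \<otimes> w = b' \<otimes> w'"
  shows "\<beta> b = \<beta> b'"
proof -
  have B: "b \<in> carrier G" "b' \<in> carrier G" and W: "w \<in> carrier G" "w' \<in> carrier G"
    using assms B_subset derived_subset S_carrier by blast+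
  have "inv b' \<otimes> b = w' \<otimes> inv w"
    using assms(5) B W by (intro inv_mult_eq_mult_inv) auto
  then have "inv b' \<otimes> b \<in> derived G S"
    using assms subgroup.m_closed[OF derived_subgroup] subgroup.m_inv_closed[OF derived_subgroup] by simp
  then have "\<beta> (inv b' \<otimes> b) = 0"
    using assms subgroup.m_closed[OF subgroup_B] subgroup.m_inv_closed[OF subgroup_B] \<beta>_derived by blast
  then show ?thesis
    using \<beta>_mult[of "inv b'" b] \<beta>_inv[of b'] assms subgroup.m_inv_closed[OF subgroup_B]
    by (simp add: algebra_simps)
qed

lemma ext_graph_initial: "ext_graph {(b \<otimes> w, \<beta> b) | b w. b \<in> B \<and> w \<in> derived G S}"
  (is "ext_graph ?R")
proof -
  have B: "\<And>x. x \<in> B \<Longrightarrow> x \<in> carrier G" and W: "\<And>x. x \<in> derived G S \<Longrightarrow> x \<in> carrier G"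
    using B_subset derived_subset S_carrier by blast+
  note Bsub = subgroup.m_closed[OF subgroup_B] subgroup.m_inv_closed[OF subgroup_B] subgroup.one_closed[OF subgroup_B]
  note Wsub = subgroup.m_closed[OF derived_subgroup] subgroup.m_inv_closed[OF derived_subgroup]
    subgroup.one_closed[OF derived_subgroup]
  have mem: "(b \<otimes> w, \<beta> b) \<in> ?R" if "b \<in> B" "w \<in> derived G S" for b w
    using that by blast
  have mult: "(b \<otimes> w \<otimes> (b' \<otimes> w'), \<beta> b + \<beta> b') \<in> ?R"
    if "b \<in> B" "w \<in> derived G S" "b' \<in> B" "w' \<in> derived G S" for b w b' w'
  proof -
    have "b \<otimes> w \<otimes> (b' \<otimes> w') = (b \<otimes> b') \<otimes> ((inv b' \<otimes> w \<otimes> inv (inv b')) \<otimes> w')"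
      using that B W by (simp add: m_assoc)
    moreover have "inv b' \<otimes> w \<otimes> inv (inv b') \<in> derived G S"
      using that Bsub(2) B_subset by (intro conj_in_derived) auto
    then have "(inv b' \<otimes> w \<otimes> inv (inv b')) \<otimes> w' \<in> derived G S"
      using that(4) Wsub(1) by blast
    ultimately have "(b \<otimes> w \<otimes> (b' \<otimes> w'), \<beta> (b \<otimes> b')) \<in> ?R"
      using mem[OF Bsub(1)[OF that(1,3)]] by simp
    then show ?thesis using \<beta>_mult that by simp
  qed
  have inverse: "(inv (b \<otimes> w), - \<beta> b) \<in> ?R" if "b \<in> B" "w \<in> derived G S" for b w
  proof -
    have "inv (b \<otimes> w) = inv b \<otimes> (b \<otimes> inv w \<otimes> inv b)"
      using that B W by (simp add: m_assoc inv_mult_group)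
    moreover have "b \<otimes> inv w \<otimes> inv b \<in> derived G S"
      using that Wsub(2) B_subset by (intro conj_in_derived) auto
    ultimately have "(inv (b \<otimes> w), \<beta> (inv b)) \<in> ?R"
      using mem[OF Bsub(2)[OF that(1)]] by simp
    then show ?thesis using \<beta>_inv that by simp
  qed
  show ?thesis
    unfolding ext_graph_def
  proof (intro conjI allI impI ballI)
    show "?R \<subseteq> S \<times> UNIV"
      using B_subset derived_subset subgroup.m_closed[OF subgroup_S] by blast
    show "(b, \<beta> b) \<in> ?R" if "b \<in> B" for b
      using mem[OF that Wsub(3)] that B by simp
    show "(w, 0) \<in> ?R" if "w \<in> derived G S" for w
      using mem[OF Bsub(3) that] that W \<beta>_mult[OF Bsub(3) Bsub(3)] by simp
  next
    fix x u v assume "(x, u) \<in> ?R" "(x, v) \<in> ?R"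
    then show "u = v" using \<beta>_derived_coset by blast
  next
    fix x u y v assume "(x, u) \<in> ?R" "(y, v) \<in> ?R"
    then show "(x \<otimes> y, u + v) \<in> ?R" using mult by blast
  next
    fix x u assume "(x, u) \<in> ?R"
    then show "(inv x, - u) \<in> ?R" using inverse by blast
  qed
qed

lemma ext_graph_Union_chain:
  assumes C: "C \<in> chains {R. ext_graph R}" and "C \<noteq> {}"
  shows "ext_graph (\<Union>C)"
proof -
  obtain R1 where "R1 \<in> C" using \<open>C \<noteq> {}\<close> by blast
  have ext: "\<And>R. R \<in> C \<Longrightarrow> ext_graph R" using chainsD2[OF C] by blast
  have common: "\<exists>R\<in>C. (x, u) \<in> R \<and> (y, v) \<in> R" if "(x, u) \<in> \<Union>C" "(y, v) \<in> \<Union>C" for x u y v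
  proof -
    from that obtain Ra Rb where "Ra \<in> C" "Rb \<in> C" "(x, u) \<in> Ra" "(y, v) \<in> Rb" by blast
    moreover have "Ra \<subseteq> Rb \<or> Rb \<subseteq> Ra" using chainsD[OF C \<open>Ra \<in> C\<close> \<open>Rb \<in> C\<close>] .
    ultimately show ?thesis by blast
  qed
  show ?thesis
    unfolding ext_graph_def
  proof (intro conjI allI impI ballI)
    show "\<Union>C \<subseteq> S \<times> UNIV" using ext_graphD(1)[OF ext] by fastforce
    show "(b, \<beta> b) \<in> \<Union>C" if "b \<in> B" for b
      using ext_graphD(5)[OF ext[OF \<open>R1 \<in> C\<close>] that] \<open>R1 \<in> C\<close> by blast
    show "(w, 0) \<in> \<Union>C" if "w \<in> derived G S" for w
      using ext_graphD(6)[OF ext[OF \<open>R1 \<in> C\<close>] that] \<open>R1 \<in> C\<close> by blast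
  next
    fix x u v assume "(x, u) \<in> \<Union>C" "(x, v) \<in> \<Union>C"
    then obtain R' where "R' \<in> C" "(x, u) \<in> R'" "(x, v) \<in> R'" using common by blast
    then show "u = v" using ext_graphD(2)[OF ext] by blast
  next
    fix x u y v assume "(x, u) \<in> \<Union>C" "(y, v) \<in> \<Union>C"
    then obtain R' where "R' \<in> C" "(x, u) \<in> R'" "(y, v) \<in> R'" using common by blast
    then show "(x \<otimes> y, u + v) \<in> \<Union>C" using ext_graphD(3)[OF ext] by blast
  next
    fix x u assume "(x, u) \<in> \<Union>C"
    then obtain R' where "R' \<in> C" "(x, u) \<in> R'" by blast
    then show "(inv x, - u) \<in> \<Union>C" using ext_graphD(4)[OF ext] by blast
  qed
qed

lemma ext_graph_maximal:
  obtains M where "ext_graph M" "\<And>R. ext_graph R \<Longrightarrow> M \<subseteq> R \<Longrightarrow> R = M"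
proof -
  have "\<forall>C\<in>chains {R. ext_graph R}. \<exists>U\<in>{R. ext_graph R}. \<forall>R\<in>C. R \<subseteq> U"
  proof
    fix C assume "C \<in> chains {R. ext_graph R}"
    then show "\<exists>U\<in>{R. ext_graph R}. \<forall>R\<in>C. R \<subseteq> U"
      using ext_graph_initial ext_graph_Union_chain by (cases "C = {}") blast+
  qed
  then obtain M where "M \<in> {R. ext_graph R}" "\<forall>R\<in>{R. ext_graph R}. M \<subseteq> R \<longrightarrow> R = M"
    using Zorn_Lemma2 by blast
  then show ?thesis using that by blast
qed

context
  fixes R assumes R: "ext_graph R"
begin

lemma ext_graph_conj:
  assumes "x \<in> S" "(y, u) \<in> R"
  shows "(x \<otimes> y \<otimes> inv x, u) \<in> R"
proof -
  have y: "y \<in> S" using ext_graphD(1)[OF R assms(2)] .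
  have "(x \<otimes> y \<otimes> inv x \<otimes> inv y \<otimes> y, 0 + u) \<in> R"
    using ext_graphD(3,6)[OF R] commutator_in_derived[OF assms(1) y] assms(2) by blast
  moreover have "x \<otimes> y \<otimes> inv x \<otimes> inv y \<otimes> y = x \<otimes> y \<otimes> inv x"
    using S_carrier assms(1) y by (simp add: m_assoc)
  ultimately show ?thesis by simp
qed

lemma ext_graph_int_pow:
  assumes xu: "(x, u) \<in> R"
  shows "(x [^] n, int_multiple n u) \<in> R"
proof -
  have x: "x \<in> carrier G" using ext_graphD(1)[OF R xu] S_carrier by blast
  have nat: "(x [^] k, int_multiple (int k) u) \<in> R" for k :: nat
  proof (induction k)
    case 0
    then show ?case using ext_graphD(6)[OF R] subgroup.one_closed[OF derived_subgroup] by simp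
  next
    case (Suc k)
    have "int_multiple (int (Suc k)) u = int_multiple (int k) u + u"
      using int_multiple_add[of "int k" 1 u] by (simp add: add.commute)
    then show ?case
      using ext_graphD(3)[OF R Suc xu] by simp
  qed
  show ?thesis
  proof (cases "n \<ge> 0")
    case True
    then show ?thesis using nat[of "nat n"] by (simp add: int_pow_int[symmetric])
  next
    case False
    define k where "k = nat (- n)"
    then have "n = - int k" using False by simp
    then have "x [^] n = inv (x [^] k)" "int_multiple n u = - int_multiple (int k) u"
      using int_pow_neg_int[OF x] int_multiple_minus by simp_all
    then show ?thesis using ext_graphD(4)[OF R nat[of k]] by simp
  qed
qed

lemma ext_graph_one: "(\<one>, 0) \<in> R"
  using ext_graphD(6)[OF R] subgroup.one_closed[OF derived_subgroup] .

lemma ext_graph_int_pow_value: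
  assumes divisible: "divisible_ab TYPE('d)" and g: "g \<in> S"
  obtains d where "\<And>n u. (g [^] n, u) \<in> R \<Longrightarrow> u = int_multiple n d"
proof -
  have gG: "g \<in> carrier G" using g S_carrier by blast
  define Z where "Z = {k::nat. k > 0 \<and> (\<exists>u. (g [^] k, u) \<in> R)}"
  have abs_in_Z: "nat \<bar>n\<bar> \<in> Z" if "(g [^] n, u) \<in> R" "n \<noteq> 0" for n :: int and u
  proof (cases "n > 0")
    case True
    then show ?thesis using that unfolding Z_def by (auto simp: int_pow_int[symmetric])
  next
    case False
    then have "g [^] nat \<bar>n\<bar> = inv (g [^] n)"
      using int_pow_neg[OF gG, of n] by (simp add: int_pow_int[symmetric])
    then show ?thesis using that ext_graphD(4)[OF R that(1)] unfolding Z_def by auto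
  qed
  show ?thesis
  proof (cases "Z = {}")
    case True
    show ?thesis
    proof (rule that[of 0])
      fix n :: int and u assume nu: "(g [^] n, u) \<in> R"
      have "n = 0"
      proof (rule ccontr)
        assume "n \<noteq> 0"
        with abs_in_Z[OF nu] True show False by simp
      qed
      then show "u = int_multiple n 0" using nu ext_graph_one ext_graphD(2)[OF R] by simp
    qed
  next
    case False
    define n0 where "n0 = (LEAST k. k \<in> Z)"
    have "n0 \<in> Z" unfolding n0_def using False by (metis LeastI ex_in_conv)
    then obtain u0 where u0: "(g [^] n0, u0) \<in> R" and "n0 > 0" unfolding Z_def by blast
    obtain d where d: "int_multiple (int n0) d = u0"
      using divisible_ab_int_multiple[OF divisible \<open>n0 > 0\<close>] by blast
    show ?thesis
    proof (rule that[of d])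
      fix n :: int and u assume nu: "(g [^] n, u) \<in> R"
      define q r where "q = n div int n0" and "r = n mod int n0"
      have n: "n = int n0 * q + r" and r: "0 \<le> r" "r < int n0"
        unfolding q_def r_def using \<open>n0 > 0\<close> by simp_all
      have q: "(g [^] (int n0 * q), int_multiple q u0) \<in> R"
        using ext_graph_int_pow[OF u0, of q] int_pow_pow[OF gG, of "int n0" q] by (simp add: int_pow_int)
      have "g [^] r = inv (g [^] (int n0 * q)) \<otimes> g [^] n"
        using n int_pow_mult[OF gG] gG by simp
      then have "(g [^] r, - int_multiple q u0 + u) \<in> R"
        using ext_graphD(3)[OF R ext_graphD(4)[OF R q] nu] by simp
      then have "r = 0"
        using abs_in_Z[of r] r Least_le[of "\<lambda>k. k \<in> Z" "nat r"] unfolding n0_def[symmetric] by fastforce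
      then have "(g [^] n, int_multiple q u0) \<in> R" using n q by simp
      then show "u = int_multiple n d"
        using nu ext_graphD(2)[OF R] \<open>r = 0\<close> n d int_multiple_mult[of "int n0" q d] by simp
    qed
  qed
qed

lemma adjoin_value_unique:
  assumes g: "g \<in> S" and d: "\<And>n u. (g [^] n, u) \<in> R \<Longrightarrow> u = int_multiple n d"
    and "(s, u) \<in> R" "(s', u') \<in> R" "s \<otimes> g [^] (n::int) = s' \<otimes> g [^] (m::int)"
  shows "u + int_multiple n d = u' + int_multiple m d"
proof -
  have gG: "g \<in> carrier G" and sG: "s \<in> carrier G" "s' \<in> carrier G"
    using g ext_graphD(1)[OF R] assms(3,4) S_carrier by blast+
  have "inv s' \<otimes> s = g [^] m \<otimes> inv (g [^] n)"
    using inv_mult_eq_mult_inv[of s "g [^] n" s' "g [^] m"] assms(5) sG gG by simp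
  also have "\<dots> = g [^] (m - n)" using int_pow_diff[OF gG] by simp
  finally have "(g [^] (m - n), - u' + u) \<in> R"
    using ext_graphD(3)[OF R ext_graphD(4)[OF R assms(4)] assms(3)] by simp
  then have "- u' + u = int_multiple (m - n) d" by (rule d)
  then show ?thesis using int_multiple_diff[of m n d] by (simp add: algebra_simps)
qed

lemma ext_graph_adjoin:
  assumes g: "g \<in> S" and d: "\<And>n u. (g [^] n, u) \<in> R \<Longrightarrow> u = int_multiple n d"
  defines "R' \<equiv> {(s \<otimes> g [^] n, u + int_multiple n d) | s u n. (s, u) \<in> R}"
  shows "ext_graph R'" and "R \<subseteq> R'" and "(g, d) \<in> R'"
proof -
  have gG: "g \<in> carrier G" using g S_carrier by blast
  have sG: "s \<in> carrier G" if "(s, u) \<in> R" for s u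
    using ext_graphD(1)[OF R that] S_carrier by blast
  have mem: "(s \<otimes> g [^] n, u + int_multiple n d) \<in> R'" if "(s, u) \<in> R" for s u and n :: int
    using that unfolding R'_def by blast
  show "(g, d) \<in> R'"
    using mem[OF ext_graph_one, of 1] gG by simp
  show R_subset: "R \<subseteq> R'"
  proof
    fix p assume "p \<in> R"
    then obtain s u where "p = (s, u)" "(s, u) \<in> R" by (cases p) auto
    then show "p \<in> R'" using mem[of s u 0] sG by simp
  qed
  show "ext_graph R'"
    unfolding ext_graph_def
  proof (intro conjI allI impI ballI)
    show "R' \<subseteq> S \<times> UNIV"
      using ext_graphD(1)[OF R] subgroup_int_pow_closed[OF subgroup_S g] subgroup.m_closed[OF subgroup_S]
      unfolding R'_def by blast
    show "(b, \<beta> b) \<in> R'" if "b \<in> B" for b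
      using R_subset ext_graphD(5)[OF R that] by blast
    show "(w, 0) \<in> R'" if "w \<in> derived G S" for w
      using R_subset ext_graphD(6)[OF R that] by blast
  next
    fix x v1 v2 assume "(x, v1) \<in> R'" "(x, v2) \<in> R'"
    then show "v1 = v2" unfolding R'_def using adjoin_value_unique[OF g d] by blast
  next
    fix x v y w assume "(x, v) \<in> R'" "(y, w) \<in> R'"
    then obtain s u n s' u' m where h: "(s, u) \<in> R" "(s', u') \<in> R" "x = s \<otimes> g [^] (n::int)"
      "y = s' \<otimes> g [^] (m::int)" "v = u + int_multiple n d" "w = u' + int_multiple m d"
      unfolding R'_def by blast
    have "x \<otimes> y = (s \<otimes> (g [^] n \<otimes> s' \<otimes> inv (g [^] n))) \<otimes> (g [^] n \<otimes> g [^] m)"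
      using h sG gG by (simp add: m_assoc)
    also have "\<dots> = (s \<otimes> (g [^] n \<otimes> s' \<otimes> inv (g [^] n))) \<otimes> g [^] (n + m)"
      using int_pow_mult[OF gG] by simp
    finally have "(x \<otimes> y, (u + u') + int_multiple (n + m) d) \<in> R'"
      using mem[OF ext_graphD(3)[OF R h(1) ext_graph_conj[OF subgroup_int_pow_closed[OF subgroup_S g] h(2)]]]
      by simp
    then show "(x \<otimes> y, v + w) \<in> R'" using h int_multiple_add[of n m d] by (simp add: algebra_simps)
  next
    fix x v assume "(x, v) \<in> R'"
    then obtain s u n where h: "(s, u) \<in> R" "x = s \<otimes> g [^] (n::int)" "v = u + int_multiple n d"
      unfolding R'_def by blast
    have "inv x = (inv (g [^] n) \<otimes> inv s \<otimes> inv (inv (g [^] n))) \<otimes> g [^] (- n)"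
      using h sG gG int_pow_neg[OF gG, of n] by (simp add: m_assoc inv_mult_group)
    moreover have "inv (g [^] n) \<in> S"
      using subgroup.m_inv_closed[OF subgroup_S subgroup_int_pow_closed[OF subgroup_S g]] .
    ultimately have "(inv x, - u + int_multiple (- n) d) \<in> R'"
      using mem[OF ext_graph_conj[OF _ ext_graphD(4)[OF R h(1)]]] by simp
    then show "(inv x, - v) \<in> R'" using h int_multiple_minus[of n d] by simp
  qed
qed

lemma ext_graph_maximal_total:
  assumes divisible: "divisible_ab TYPE('d)" and maximal: "\<And>R'. ext_graph R' \<Longrightarrow> R \<subseteq> R' \<Longrightarrow> R' = R"
    and g: "g \<in> S"
  shows "\<exists>u. (g, u) \<in> R"
proof -
  obtain d where d: "\<And>n u. (g [^] n, u) \<in> R \<Longrightarrow> u = int_multiple n d"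
    using ext_graph_int_pow_value[OF divisible g] by blast
  then show ?thesis
    using maximal ext_graph_adjoin[OF g d] by blast
qed

end

theorem extension_exists:
  assumes "divisible_ab TYPE('d)"
  obtains \<chi> where "\<And>x y. x \<in> S \<Longrightarrow> y \<in> S \<Longrightarrow> \<chi> (x \<otimes> y) = \<chi> x + \<chi> y"
    and "\<And>b. b \<in> B \<Longrightarrow> \<chi> b = \<beta> b"
proof -
  obtain M where M: "ext_graph M" and maximal: "\<And>R. ext_graph R \<Longrightarrow> M \<subseteq> R \<Longrightarrow> R = M"
    using ext_graph_maximal by blast
  define \<chi> where "\<chi> x = (THE u. (x, u) \<in> M)" for x
  have \<chi>: "(x, \<chi> x) \<in> M" if x: "x \<in> S" for x
  proof -
    obtain u where "(x, u) \<in> M" using ext_graph_maximal_total[OF M assms maximal x] by blast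
    moreover have "\<chi> x = u"
      unfolding \<chi>_def using \<open>(x, u) \<in> M\<close> ext_graphD(2)[OF M] by (intro the_equality) blast+
    ultimately show ?thesis by simp
  qed
  show ?thesis
  proof (rule that)
    fix x y assume "x \<in> S" "y \<in> S"
    then have "x \<otimes> y \<in> S" by (rule subgroup.m_closed[OF subgroup_S])
    with \<open>x \<in> S\<close> \<open>y \<in> S\<close> show "\<chi> (x \<otimes> y) = \<chi> x + \<chi> y"
      using ext_graphD(2)[OF M \<chi> ext_graphD(3)[OF M \<chi> \<chi>]] by simp
  next
    fix b assume "b \<in> B"
    then show "\<chi> b = \<beta> b" using ext_graphD(2)[OF M \<chi> ext_graphD(5)[OF M]] B_subset by blast
  qed
qed

end

lemma (in group) divisible_hom_extension:
  fixes \<beta> :: "'a \<Rightarrow> 'd::ab_group_add"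
  assumes "divisible_ab TYPE('d)" "subgroup S G" "subgroup B G" "B \<subseteq> S"
    and "\<And>x y. x \<in> B \<Longrightarrow> y \<in> B \<Longrightarrow> \<beta> (x \<otimes> y) = \<beta> x + \<beta> y"
    and "\<And>w. w \<in> B \<Longrightarrow> w \<in> derived G S \<Longrightarrow> \<beta> w = 0"
  obtains \<chi> where "\<And>x y. x \<in> S \<Longrightarrow> y \<in> S \<Longrightarrow> \<chi> (x \<otimes> y) = \<chi> x + \<chi> y"
    and "\<And>b. b \<in> B \<Longrightarrow> \<chi> b = \<beta> b"
proof -
  interpret hom_extension G S B \<beta>
    by (rule hom_extension.intro[OF is_group hom_extension_axioms.intro]) (use assms in auto)
  show ?thesis using extension_exists[OF assms(1)] that by blast
qed

lemma tra_res_eq_tra: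
  assumes "addhom E A \<psi>0" "\<forall>a \<in> A \<inter> derived E (carrier E). \<psi>0 a = \<phi> a"
  obtains \<psi> where "addhom E A \<psi>" "\<forall>a \<in> A \<inter> derived E (carrier E). \<psi> a = \<phi> a"
    "tra_res E A \<phi> = tra E A \<psi>"
proof -
  let ?P = "\<lambda>\<psi>. addhom E A \<psi> \<and> (\<forall>a \<in> A \<inter> derived E (carrier E). \<psi> a = \<phi> a)"
  have "?P (SOME \<psi>. ?P \<psi>)" using assms by (intro someI[of ?P \<psi>0]) blast
  then show ?thesis using that unfolding tra_res_def by blast
qed

lemma addhom_restrict_iff [simp]: "addhom (G\<lparr>carrier := S\<rparr>) B \<psi> \<longleftrightarrow> addhom G B \<psi>"
  unfolding addhom_def by simp

locale central_subgroup = group G for G (structure) +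
  fixes A :: "'a set"
  assumes normal_A: "A \<lhd> G"
    and central: "\<And>a x. a \<in> A \<Longrightarrow> x \<in> carrier G \<Longrightarrow> a \<otimes> x = x \<otimes> a"
begin

lemma subgroup_A: "subgroup A G"
  using normal_A normal_imp_subgroup by blast

lemma A_carrier: "a \<in> A \<Longrightarrow> a \<in> carrier G"
  using subgroup.subset[OF subgroup_A] by blast

lemma A_m_closed: "a \<in> A \<Longrightarrow> b \<in> A \<Longrightarrow> a \<otimes> b \<in> A"
  using subgroup.m_closed[OF subgroup_A] .

lemma A_inv_closed: "a \<in> A \<Longrightarrow> inv a \<in> A"
  using subgroup.m_inv_closed[OF subgroup_A] .

lemma A_one_closed: "\<one> \<in> A"
  using subgroup.one_closed[OF subgroup_A] .

lemma derived_A: "derived G A = {\<one>}"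
proof -
  interpret A: group "G\<lparr>carrier := A\<rparr>"
    using subgroup.subgroup_is_group[OF subgroup_A is_group] .
  have "comm_group (G\<lparr>carrier := A\<rparr>)"
    by (rule A.group_comm_groupI) (use central A_carrier in auto)
  then have "derived (G\<lparr>carrier := A\<rparr>) A = {\<one>}"
    using comm_group.derived_eq_singleton by fastforce
  then show ?thesis
    using derived_consistent[OF _ subgroup_A] by blast
qed

lemma rcos_mult_right:
  assumes "a \<in> A" "x \<in> carrier G"
  shows "A #> (x \<otimes> a) = A #> x"
proof -
  have "x \<otimes> a \<in> A #> x"
    using assms central[OF assms] unfolding r_coset_def by (auto intro!: bexI[of _ a])
  then show ?thesis using repr_independence[OF _ assms(2) subgroup_A] by simp
qed

lemma rcos_eq_iff:
  assumes "x \<in> carrier G" "y \<in> carrier G"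
  shows "A #> x = A #> y \<longleftrightarrow> (\<exists>a\<in>A. y = x \<otimes> a)"
proof
  assume "A #> x = A #> y"
  then have "y \<in> A #> x" using rcos_self[OF assms(2) subgroup_A] by simp
  then obtain a where "a \<in> A" "y = a \<otimes> x" unfolding r_coset_def by blast
  then show "\<exists>a\<in>A. y = x \<otimes> a" using central assms by metis
qed (use rcos_mult_right assms in metis)

lemma r_coset_hom: "(\<lambda>x. A #> x) \<in> hom G (G Mod A)"
  using normal.r_coset_hom_Mod[OF normal_A] .

lemma rcos_in_Mod: "x \<in> carrier G \<Longrightarrow> A #> x \<in> carrier (G Mod A)"
  using r_coset_hom unfolding hom_def by blast

lemma rcos_mult: "x \<in> carrier G \<Longrightarrow> y \<in> carrier G \<Longrightarrow> (A #> x) <#> (A #> y) = A #> (x \<otimes> y)"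
  using normal.rcos_sum[OF normal_A] by blast

lemma transv_rcos:
  assumes "x \<in> carrier G"
  shows "transv (A #> x) \<in> A #> x" "transv (A #> x) \<in> carrier G" "A #> transv (A #> x) = A #> x"
proof -
  show "transv (A #> x) \<in> A #> x"
    using rcos_self[OF assms subgroup_A] unfolding transv_def by (rule someI)
  then show "transv (A #> x) \<in> carrier G"
    using r_coset_subset_G[OF subgroup.subset[OF subgroup_A] assms] by blast
  show "A #> transv (A #> x) = A #> x"
    using repr_independence[OF \<open>transv (A #> x) \<in> A #> x\<close> assms subgroup_A] by simp
qed

lemma transv_Mod: "U \<in> carrier (G Mod A) \<Longrightarrow> transv U \<in> carrier G \<and> A #> transv U = U"
  using transv_rcos unfolding carrier_FactGroup by auto

definition offset :: "'a \<Rightarrow> 'a" where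
  "offset x = transv (A #> x) \<otimes> inv x"

lemma offset_in_A:
  assumes "x \<in> carrier G"
  shows "offset x \<in> A"
proof -
  obtain a where "a \<in> A" "transv (A #> x) = a \<otimes> x"
    using transv_rcos(1)[OF assms] unfolding r_coset_def by blast
  then show ?thesis unfolding offset_def using assms A_carrier by (simp add: m_assoc)
qed

lemma transv_eq_offset: "x \<in> carrier G \<Longrightarrow> transv (A #> x) = offset x \<otimes> x"
  unfolding offset_def using transv_rcos(2) by (simp add: m_assoc)

lemma transv_factor_set:
  assumes x: "x \<in> carrier G" and y: "y \<in> carrier G"
  shows "transv (A #> x) \<otimes> transv (A #> y) \<otimes> inv (transv (A #> (x \<otimes> y)))
       = offset x \<otimes> offset y \<otimes> inv (offset (x \<otimes> y))"
proof -
  have a: "offset x \<in> carrier G" "offset y \<in> carrier G" "offset (x \<otimes> y) \<in> carrier G"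
    using offset_in_A A_carrier x y by blast+
  have "transv (A #> x) \<otimes> transv (A #> y) \<otimes> inv (transv (A #> (x \<otimes> y)))
      = offset x \<otimes> (x \<otimes> offset y) \<otimes> y \<otimes> (inv (x \<otimes> y) \<otimes> inv (offset (x \<otimes> y)))"
    using a x y by (simp add: transv_eq_offset m_assoc inv_mult_group)
  also have "\<dots> = offset x \<otimes> (offset y \<otimes> x) \<otimes> y \<otimes> (inv (x \<otimes> y) \<otimes> inv (offset (x \<otimes> y)))"
    using central[OF offset_in_A[OF y] x] by simp
  also have "\<dots> = offset x \<otimes> offset y \<otimes> ((x \<otimes> y) \<otimes> inv (x \<otimes> y)) \<otimes> inv (offset (x \<otimes> y))"
    using a x y by (simp add: m_assoc)
  also have "\<dots> = offset x \<otimes> offset y \<otimes> inv (offset (x \<otimes> y))"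
    using a x y by simp
  finally show ?thesis .
qed

lemma Mod_restrict_eq: "G\<lparr>carrier := S\<rparr> Mod A = (G Mod A)\<lparr>carrier := carrier (G\<lparr>carrier := S\<rparr> Mod A)\<rparr>"
  by (simp add: FactGroup_def set_mult_def fun_eq_iff)

lemma carrier_Mod_restrict: "carrier (G\<lparr>carrier := S\<rparr> Mod A) = (\<lambda>x. A #> x) ` S"
  using carrier_FactGroup[of "G\<lparr>carrier := S\<rparr>" A] by (simp add: r_coset_def)

text \<open>The 2-cochain of the transgression, written with the operations of G instead of those of
  the subgroup.\<close>
definition tra_cochain :: "('a \<Rightarrow> 'd::ab_group_add) \<Rightarrow> 'a set \<Rightarrow> 'a set \<Rightarrow> 'd" where
  "tra_cochain \<psi> U V = \<psi> (transv U \<otimes> transv V \<otimes> inv (transv (U <#> V)))"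

context
  fixes S assumes S: "subgroup S G" and A_subset: "A \<subseteq> S"
begin

lemma subgroup_Mod_restrict: "subgroup (carrier (G\<lparr>carrier := S\<rparr> Mod A)) (G Mod A)"
  using normal_subgroup_factorize[OF normal_A A_subset S] by (simp add: FactGroup_def)

lemma group_Mod_restrict: "group (G\<lparr>carrier := S\<rparr> Mod A)"
  using subgroup.subgroup_is_group[OF subgroup_Mod_restrict normal.factorgroup_is_group[OF normal_A]]
  by (simp add: Mod_restrict_eq[symmetric])

lemma transv_Mod_restrict:
  assumes "U \<in> carrier (G\<lparr>carrier := S\<rparr> Mod A)"
  shows "transv U \<in> S" "A #> transv U = U"
proof -
  obtain h where h: "h \<in> S" "U = A #> h" using assms carrier_Mod_restrict by blast
  then have "h \<in> carrier G" using subgroup.subset[OF S] by blast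
  moreover have "offset h \<in> S" using offset_in_A[OF \<open>h \<in> carrier G\<close>] A_subset by blast
  ultimately show "transv U \<in> S"
    using h transv_eq_offset subgroup.m_closed[OF S] by simp
  show "A #> transv U = U" using transv_rcos(3)[OF \<open>h \<in> carrier G\<close>] h by simp
qed

lemma res2_Mod_restrict_eq:
  "\<eta> \<in> H2 (G Mod A) \<Longrightarrow> F \<in> \<eta> \<Longrightarrow>
   res2 (G\<lparr>carrier := S\<rparr> Mod A) \<eta> = cls (G\<lparr>carrier := S\<rparr> Mod A) (restr (carrier (G\<lparr>carrier := S\<rparr> Mod A)) F)"
  using group.res2_eq_cls_restr[OF normal.factorgroup_is_group[OF normal_A] _ _ subgroup_Mod_restrict]
  by (simp add: Mod_restrict_eq[symmetric])

lemma restr_in_cocycles2_Mod_restrict: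
  "F \<in> cocycles2 (G Mod A) \<Longrightarrow> restr (carrier (G\<lparr>carrier := S\<rparr> Mod A)) F \<in> cocycles2 (G\<lparr>carrier := S\<rparr> Mod A)"
  using group.restr_in_cocycles2[OF normal.factorgroup_is_group[OF normal_A] _ subgroup_Mod_restrict]
  by (simp add: Mod_restrict_eq[symmetric])

lemma tra_restrict_eq:
  shows "tra (G\<lparr>carrier := S\<rparr>) A \<psi>
    = cls (G\<lparr>carrier := S\<rparr> Mod A) (restr (carrier (G\<lparr>carrier := S\<rparr> Mod A)) (tra_cochain \<psi>))"
proof -
  let ?Q = "G\<lparr>carrier := S\<rparr> Mod A"
  have "(\<lambda>U V. if U \<in> carrier ?Q \<and> V \<in> carrier ?Q
          then \<psi> (transv U \<otimes>\<^bsub>G\<lparr>carrier := S\<rparr>\<^esub> transv V \<otimes>\<^bsub>G\<lparr>carrier := S\<rparr>\<^esub>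
                 inv\<^bsub>G\<lparr>carrier := S\<rparr>\<^esub> transv (U <#>\<^bsub>G\<lparr>carrier := S\<rparr>\<^esub> V))
          else 0)
      = restr (carrier ?Q) (tra_cochain \<psi>)"
  proof (intro ext)
    fix U V
    show "(if U \<in> carrier ?Q \<and> V \<in> carrier ?Q
          then \<psi> (transv U \<otimes>\<^bsub>G\<lparr>carrier := S\<rparr>\<^esub> transv V \<otimes>\<^bsub>G\<lparr>carrier := S\<rparr>\<^esub>
                 inv\<^bsub>G\<lparr>carrier := S\<rparr>\<^esub> transv (U <#>\<^bsub>G\<lparr>carrier := S\<rparr>\<^esub> V))
          else 0)
      = restr (carrier ?Q) (tra_cochain \<psi>) U V"
    proof (cases "U \<in> carrier ?Q \<and> V \<in> carrier ?Q")
      case True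
      then have "U <#> V \<in> carrier ?Q"
        using monoid.m_closed[OF group.is_monoid[OF group_Mod_restrict]] by simp
      then have "transv (U <#> V) \<in> S" by (rule transv_Mod_restrict)
      then show ?thesis
        using True m_inv_consistent[OF S] unfolding restr_def tra_cochain_def set_mult_def by simp
    next
      case False
      show ?thesis unfolding restr_def if_not_P[OF False] by (rule refl)
    qed
  qed
  then show ?thesis unfolding tra_def by simp
qed

lemma tra_res_image_eq_cls:
  fixes x :: "('a set \<Rightarrow> 'a set \<Rightarrow> 'd::ab_group_add) set"
  assumes divisible: "divisible_ab TYPE('d)" and x: "x \<in> tra_res_image (G\<lparr>carrier := S\<rparr>) A"
  obtains \<psi> where "addhom G A \<psi>"
    and "x = cls (G\<lparr>carrier := S\<rparr> Mod A) (restr (carrier (G\<lparr>carrier := S\<rparr> Mod A)) (tra_cochain \<psi>))"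
proof -
  let ?GS = "G\<lparr>carrier := S\<rparr>"
  have derived_S: "derived ?GS S = derived G S" using derived_consistent[OF _ S] by blast
  obtain \<phi> where \<phi>: "addhom G (A \<inter> derived G S) \<phi>" and x_eq: "x = tra_res ?GS A \<phi>"
    using x derived_S unfolding tra_res_image_def by auto
  have B: "subgroup (A \<inter> derived G S) G"
    using subgroups_Inter_pair[OF subgroup_A derived_is_subgroup] subgroup.subset[OF S] by blast
  txt \<open>A is abelian, so the condition for extending \<phi> to A is vacuous.\<close>
  obtain \<chi> where "\<And>x y. x \<in> A \<Longrightarrow> y \<in> A \<Longrightarrow> \<chi> (x \<otimes> y) = \<chi> x + \<chi> y"
    and "\<And>b. b \<in> A \<inter> derived G S \<Longrightarrow> \<chi> b = \<phi> b"
  proof (rule divisible_hom_extension[OF divisible subgroup_A B])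
    show "\<phi> w = 0" if "w \<in> A \<inter> derived G S" "w \<in> derived G A" for w
      using that derived_A addhom_one[OF B \<phi>] by simp
  qed (use \<phi> in \<open>auto simp: addhom_def\<close>)
  then have "addhom ?GS A \<chi>" "\<forall>a \<in> A \<inter> derived ?GS (carrier ?GS). \<chi> a = \<phi> a"
    using derived_S by (auto simp: addhom_def)
  then obtain \<psi> where \<psi>: "addhom G A \<psi>" and "tra_res ?GS A \<phi> = tra ?GS A \<psi>"
    by (rule tra_res_eq_tra) simp
  then have "x = cls (G\<lparr>carrier := S\<rparr> Mod A) (restr (carrier (G\<lparr>carrier := S\<rparr> Mod A)) (tra_cochain \<psi>))"
    using x_eq tra_restrict_eq by simp
  with \<psi> show ?thesis by (rule that)
qed

end

lemma transv_factor_in_A: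
  assumes "U \<in> carrier (G Mod A)" "V \<in> carrier (G Mod A)"
  shows "transv U \<otimes> transv V \<otimes> inv (transv (U <#> V)) \<in> A"
proof -
  obtain x y where "x \<in> carrier G" "y \<in> carrier G" "U = A #> x" "V = A #> y"
    using assms unfolding carrier_FactGroup by blast
  then show ?thesis
    using transv_factor_set offset_in_A A_m_closed A_inv_closed rcos_mult by simp
qed

lemma transv_mult_eq:
  assumes "U \<in> carrier (G Mod A)" "V \<in> carrier (G Mod A)"
  shows "transv U \<otimes> transv V = transv (U <#> V) \<otimes> (transv U \<otimes> transv V \<otimes> inv (transv (U <#> V)))"
proof -
  let ?g = "transv U \<otimes> transv V \<otimes> inv (transv (U <#> V))"
  have "U <#> V \<in> carrier (G Mod A)"
    using assms normal.factorgroup_is_group[OF normal_A] group.is_monoid monoid.m_closed by fastforce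
  then have G: "transv U \<in> carrier G" "transv V \<in> carrier G" "transv (U <#> V) \<in> carrier G"
    using transv_Mod assms by auto
  have "transv (U <#> V) \<otimes> ?g = ?g \<otimes> transv (U <#> V)"
    using central[OF transv_factor_in_A[OF assms] G(3)] by simp
  also have "\<dots> = transv U \<otimes> transv V" using G by (simp add: m_assoc)
  finally show ?thesis by simp
qed

lemma tra_cochain_rcos:
  assumes \<psi>: "addhom G A \<psi>" and x: "x \<in> carrier G" and y: "y \<in> carrier G"
  shows "tra_cochain \<psi> (A #> x) (A #> y) = \<psi> (offset x) + \<psi> (offset y) - \<psi> (offset (x \<otimes> y))"
proof -
  have off: "offset x \<in> A" "offset y \<in> A" "offset (x \<otimes> y) \<in> A" using offset_in_A x y by auto
  have "tra_cochain \<psi> (A #> x) (A #> y) = \<psi> (offset x \<otimes> offset y \<otimes> inv (offset (x \<otimes> y)))"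
    unfolding tra_cochain_def using transv_factor_set[OF x y] rcos_mult[OF x y] by simp
  also have "\<dots> = \<psi> (offset x) + \<psi> (offset y) - \<psi> (offset (x \<otimes> y))"
    using \<psi> off A_m_closed A_inv_closed addhom_inv[OF subgroup_A \<psi>] unfolding addhom_def by simp
  finally show ?thesis .
qed

lemma res2_infl_eq_zero:
  fixes \<eta> :: "('a set \<Rightarrow> 'a set \<Rightarrow> 'd::ab_group_add) set"
  assumes S: "subgroup S G" and A_subset: "A \<subseteq> S" and divisible: "divisible_ab TYPE('d)"
    and \<eta>: "\<eta> \<in> H2 (G Mod A)"
    and tra: "res2 (G\<lparr>carrier := S\<rparr> Mod A) \<eta> \<in> tra_res_image (G\<lparr>carrier := S\<rparr>) A"
  shows "res2 (G\<lparr>carrier := S\<rparr>) (infl G A \<eta>) = cls (G\<lparr>carrier := S\<rparr>) (\<lambda>_ _. 0)"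
proof -
  let ?Q = "G\<lparr>carrier := S\<rparr> Mod A"
  let ?T = "carrier ?Q"
  obtain \<psi> where \<psi>: "addhom G A \<psi>" and "res2 ?Q \<eta> = cls ?Q (restr ?T (tra_cochain \<psi>))"
    using tra_res_image_eq_cls[OF S A_subset divisible tra] by blast
  then have "(restr ?T (rep \<eta>), restr ?T (tra_cochain \<psi>)) \<in> cohom_rel ?Q"
    using res2_Mod_restrict_eq[OF S A_subset \<eta> H2_rep(1)[OF \<eta>]]
      restr_in_cocycles2_Mod_restrict[OF S A_subset H2_rep(2)[OF \<eta>]] by (metis cls_eqD)
  then obtain c where c: "\<And>U V. U \<in> ?T \<Longrightarrow> V \<in> ?T \<Longrightarrow>
      restr ?T (rep \<eta>) U V - restr ?T (tra_cochain \<psi>) U V = c V - c (U \<otimes>\<^bsub>?Q\<^esub> V) + c U"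
    by (metis cohom_relE)
  txt \<open>Pulled back to G, the transgression cochain is the coboundary of \<psi> \<circ> offset.\<close>
  have "\<exists>e. \<forall>h\<in>S. \<forall>h'\<in>S. pullback2 G (\<lambda>x. A #> x) (rep \<eta>) h h' = e h' - e (h \<otimes> h') + e h"
  proof (intro exI ballI)
    fix h h' assume h: "h \<in> S" "h' \<in> S"
    then have hG: "h \<in> carrier G" "h' \<in> carrier G" using subgroup.subset[OF S] by auto
    have U: "A #> h \<in> ?T" "A #> h' \<in> ?T" using h carrier_Mod_restrict by auto
    have "pullback2 G (\<lambda>x. A #> x) (rep \<eta>) h h'
        = tra_cochain \<psi> (A #> h) (A #> h') + (c (A #> h') - c (A #> (h \<otimes> h')) + c (A #> h))"
      using c[OF U] U hG rcos_mult[OF hG] unfolding pullback2_def restr_def by (simp add: algebra_simps)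
    then show "pullback2 G (\<lambda>x. A #> x) (rep \<eta>) h h'
        = (\<psi> (offset h') + c (A #> h')) - (\<psi> (offset (h \<otimes> h')) + c (A #> (h \<otimes> h')))
          + (\<psi> (offset h) + c (A #> h))"
      using tra_cochain_rcos[OF \<psi> hG] by (simp add: algebra_simps)
  qed
  moreover have pb: "pullback2 G (\<lambda>x. A #> x) (rep \<eta>) \<in> cocycles2 G"
    by (rule pullback2_in_cocycles2[OF r_coset_hom H2_rep(2)[OF \<eta>]])
  ultimately show ?thesis
    unfolding normal.infl_eq_cls_pullback2[OF normal_A \<eta> H2_rep(1)[OF \<eta>]]
    by (subst res2_eq_zero_iff[OF cls_in_H2[OF pb] cls_self[OF pb] S])
qed

end

locale cocycle_descent = central_subgroup +
  fixes f0 :: "'a \<Rightarrow> 'a \<Rightarrow> 'd::ab_group_add"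
  assumes f0_cocycle: "f0 \<in> cocycles2 G"
    and f0_A_A: "\<And>a b. a \<in> A \<Longrightarrow> b \<in> A \<Longrightarrow> f0 a b = 0"
    and f0_sym_A: "\<And>a x. a \<in> A \<Longrightarrow> x \<in> carrier G \<Longrightarrow> f0 a x = f0 x a"
begin

text \<open>Subtracting the coboundary of corr makes f0 constant on A-cosets in both arguments,
  so that it descends to a cocycle F on G/A.\<close>
definition corr :: "'a \<Rightarrow> 'd" where
  "corr z = - f0 (transv (A #> z)) (inv (transv (A #> z)) \<otimes> z)"

definition f1 :: "'a \<Rightarrow> 'a \<Rightarrow> 'd" where "f1 = minus_cobound G f0 corr"

lemma f0_mult_A_left:
  assumes x: "x \<in> carrier G" and y: "y \<in> carrier G" and a: "a \<in> A"
  shows "f0 (x \<otimes> a) y = f0 x y + f0 (x \<otimes> y) a - f0 x a"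
proof -
  have ac: "a \<in> carrier G" using A_carrier a .
  have "f0 x a + f0 (x \<otimes> a) y = f0 a y + f0 x (a \<otimes> y)" using cocycles2D[OF f0_cocycle x ac y] .
  moreover have "f0 x y + f0 (x \<otimes> y) a = f0 y a + f0 x (y \<otimes> a)" using cocycles2D[OF f0_cocycle x y ac] .
  moreover have "a \<otimes> y = y \<otimes> a" using central a y by blast
  moreover have "f0 a y = f0 y a" using f0_sym_A a y by blast
  ultimately show ?thesis by (simp add: algebra_simps)
qed

lemma f0_mult_A_right:
  assumes x: "x \<in> carrier G" and y: "y \<in> carrier G" and a: "a \<in> A"
  shows "f0 x (y \<otimes> a) = f0 x y + f0 (x \<otimes> y) a - f0 y a"
  using cocycles2D[OF f0_cocycle x y A_carrier[OF a]] by (simp add: algebra_simps)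

lemma f0_A_additive:
  assumes z: "z \<in> carrier G" and a: "a \<in> A" and b: "b \<in> A"
  shows "f0 z (a \<otimes> b) = f0 z a + f0 (z \<otimes> a) b"
  using cocycles2D[OF f0_cocycle z A_carrier[OF a] A_carrier[OF b]] f0_A_A[OF a b] by simp

lemma corr_mult_A:
  assumes z: "z \<in> carrier G" and a: "a \<in> A"
  shows "corr (z \<otimes> a) = corr z - f0 z a"
proof -
  define \<sigma> where "\<sigma> = transv (A #> z)"
  have s1: "transv (A #> (z \<otimes> a)) = \<sigma>" unfolding \<sigma>_def using rcos_mult_right[OF a z] by simp
  have sc: "\<sigma> \<in> carrier G" unfolding \<sigma>_def using transv_rcos(2)[OF z] .
  define b where "b = inv \<sigma> \<otimes> z"
  have al: "offset z \<in> A" "inv (offset z) \<in> A" using offset_in_A[OF z] A_inv_closed by auto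
  have alc: "offset z \<in> carrier G" "inv (offset z) \<in> carrier G" using al A_carrier by auto
  have "b = inv z \<otimes> (inv (offset z) \<otimes> z)" unfolding b_def \<sigma>_def using transv_eq_offset[OF z] alc z
    by (simp add: inv_mult_group m_assoc)
  also have "\<dots> = inv z \<otimes> (z \<otimes> inv (offset z))" using central[OF al(2) z] by simp
  also have "\<dots> = inv (offset z)" using alc z by simp
  finally have bA: "b \<in> A" using al by simp
  have ac: "a \<in> carrier G" using A_carrier a .
  have e1: "inv \<sigma> \<otimes> (z \<otimes> a) = b \<otimes> a" unfolding b_def using sc z ac by (simp add: m_assoc)
  have e2: "\<sigma> \<otimes> b = z" unfolding b_def using sc z by simp
  have "corr (z \<otimes> a) = - f0 \<sigma> (b \<otimes> a)" unfolding corr_def using s1 e1 by simp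
  also have "\<dots> = - (f0 \<sigma> b + f0 z a)" using f0_A_additive[OF sc bA a] e2 by simp
  also have "\<dots> = corr z - f0 z a" unfolding corr_def \<sigma>_def[symmetric] b_def by simp
  finally show ?thesis .
qed

lemma f1_in_cocycles2: "f1 \<in> cocycles2 G"
  unfolding f1_def by (rule minus_cobound_in_cocycles2[OF f0_cocycle])

lemma cohom_rel_f0_f1: "(f0, f1) \<in> cohom_rel G"
  unfolding f1_def by (rule cohom_rel_minus_cobound[OF f0_cocycle])

lemma f1_mult_A_left:
  assumes x: "x \<in> carrier G" and y: "y \<in> carrier G" and a: "a \<in> A"
  shows "f1 (x \<otimes> a) y = f1 x y"
proof -
  have ac: "a \<in> carrier G" using A_carrier a .
  have xay: "x \<otimes> a \<otimes> y = (x \<otimes> y) \<otimes> a" using central[OF a y] x y ac by (simp add: m_assoc)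
  have "f1 (x \<otimes> a) y = f0 (x \<otimes> a) y - (corr y - corr ((x \<otimes> y) \<otimes> a) + corr (x \<otimes> a))"
    unfolding f1_def minus_cobound_def using x y ac xay by simp
  also have "\<dots> = (f0 x y + f0 (x \<otimes> y) a - f0 x a) - (corr y - (corr (x \<otimes> y) - f0 (x \<otimes> y) a) + (corr x - f0 x a))"
    using f0_mult_A_left[OF x y a] corr_mult_A[OF _ a, of "x \<otimes> y"] corr_mult_A[OF x a] x y by simp
  also have "\<dots> = f0 x y - (corr y - corr (x \<otimes> y) + corr x)" by (simp add: algebra_simps)
  also have "\<dots> = f1 x y" unfolding f1_def minus_cobound_def using x y by simp
  finally show ?thesis .
qed

lemma f1_mult_A_right:
  assumes x: "x \<in> carrier G" and y: "y \<in> carrier G" and a: "a \<in> A"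
  shows "f1 x (y \<otimes> a) = f1 x y"
proof -
  have ac: "a \<in> carrier G" using A_carrier a .
  have xya: "x \<otimes> (y \<otimes> a) = (x \<otimes> y) \<otimes> a" using x y ac by (simp add: m_assoc)
  have "f1 x (y \<otimes> a) = f0 x (y \<otimes> a) - (corr (y \<otimes> a) - corr ((x \<otimes> y) \<otimes> a) + corr x)"
    unfolding f1_def minus_cobound_def using x y ac xya by simp
  also have "\<dots> = (f0 x y + f0 (x \<otimes> y) a - f0 y a) - ((corr y - f0 y a) - (corr (x \<otimes> y) - f0 (x \<otimes> y) a) + corr x)"
    using f0_mult_A_right[OF x y a] corr_mult_A[OF _ a, of "x \<otimes> y"] corr_mult_A[OF y a] x y by simp
  also have "\<dots> = f0 x y - (corr y - corr (x \<otimes> y) + corr x)" by (simp add: algebra_simps)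
  also have "\<dots> = f1 x y" unfolding f1_def minus_cobound_def using x y by simp
  finally show ?thesis .
qed

lemma f1_rcos_invariant:
  assumes "x \<in> carrier G" "x' \<in> carrier G" "y \<in> carrier G" "y' \<in> carrier G"
    "A #> x = A #> x'" "A #> y = A #> y'"
  shows "f1 x' y' = f1 x y"
proof -
  obtain a b where "a \<in> A" "x' = x \<otimes> a" "b \<in> A" "y' = y \<otimes> b" using rcos_eq_iff assms by meson
  then show ?thesis using f1_mult_A_left f1_mult_A_right assms by simp
qed

definition F :: "'a set \<Rightarrow> 'a set \<Rightarrow> 'd" where
  "F U V = (if U \<in> carrier (G Mod A) \<and> V \<in> carrier (G Mod A) then f1 (transv U) (transv V) else 0)"

lemma F_in_cocycles2: "F \<in> cocycles2 (G Mod A)"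
proof (rule cocycles2I)
  fix U V assume "U \<notin> carrier (G Mod A) \<or> V \<notin> carrier (G Mod A)"
  then show "F U V = 0" unfolding F_def by auto
next
  fix U V W assume UVW: "U \<in> carrier (G Mod A)" "V \<in> carrier (G Mod A)" "W \<in> carrier (G Mod A)"
  define u v w where "u = transv U" "v = transv V" "w = transv W"
  have c: "u \<in> carrier G" "v \<in> carrier G" "w \<in> carrier G" "A #> u = U" "A #> v = V" "A #> w = W"
    using transv_Mod UVW unfolding u_v_w_def by auto
  have UV: "U \<otimes>\<^bsub>G Mod A\<^esub> V = A #> (u \<otimes> v)" using rcos_mult c by force
  have VW: "V \<otimes>\<^bsub>G Mod A\<^esub> W = A #> (v \<otimes> w)" using rcos_mult c by force
  have UVc: "A #> (u \<otimes> v) \<in> carrier (G Mod A)" "A #> (v \<otimes> w) \<in> carrier (G Mod A)"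
    using rcos_in_Mod c by auto
  have t1: "f1 (transv (A #> (u \<otimes> v))) w = f1 (u \<otimes> v) w"
    using f1_rcos_invariant[of "u \<otimes> v" "transv (A #> (u \<otimes> v))" w w] transv_rcos c by simp
  have t2: "f1 u (transv (A #> (v \<otimes> w))) = f1 u (v \<otimes> w)"
    using f1_rcos_invariant[of u u "v \<otimes> w" "transv (A #> (v \<otimes> w))"] transv_rcos c by simp
  show "F U V + F (U \<otimes>\<^bsub>G Mod A\<^esub> V) W = F V W + F U (V \<otimes>\<^bsub>G Mod A\<^esub> W)"
    unfolding F_def using UVW UV VW UVc t1 t2 cocycles2D[OF f1_in_cocycles2 c(1-3)] u_v_w_def by simp
qed

lemma pullback2_F: "pullback2 G (\<lambda>x. A #> x) F = f1"
proof (intro ext)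
  fix x y
  show "pullback2 G (\<lambda>x. A #> x) F x y = f1 x y"
  proof (cases "x \<in> carrier G \<and> y \<in> carrier G")
    case True
    then show ?thesis unfolding pullback2_def F_def
      using rcos_in_Mod f1_rcos_invariant[of x "transv (A #> x)" y "transv (A #> y)"] transv_rcos by auto
  next
    case False
    then show ?thesis unfolding pullback2_def f1_def minus_cobound_def by auto
  qed
qed

lemma infl_cls_F: "infl G A (cls (G Mod A) F) = cls G f0"
proof -
  have "infl G A (cls (G Mod A) F) = cls G f1"
    using normal.infl_eq_cls_pullback2[OF normal_A cls_in_H2[OF F_in_cocycles2] cls_self[OF F_in_cocycles2]]
    by (simp add: pullback2_F)
  also have "\<dots> = cls G f0" using cls_eqI[OF cohom_rel_f0_f1] by simp
  finally show ?thesis .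
qed

lemma corr_transv: "U \<in> carrier (G Mod A) \<Longrightarrow> corr (transv U) = - f0 (transv U) \<one>"
  unfolding corr_def using transv_Mod by simp

context
  fixes S and c :: "'a \<Rightarrow> 'd"
  assumes S: "subgroup S G" and A_subset: "A \<subseteq> S"
    and f0_S: "\<And>x y. x \<in> S \<Longrightarrow> y \<in> S \<Longrightarrow> f0 x y = c y - c (x \<otimes> y) + c x"
begin

lemma c_additive_A: "a \<in> A \<Longrightarrow> b \<in> A \<Longrightarrow> c (a \<otimes> b) = c a + c b"
  using f0_S[of a b] f0_A_A[of a b] A_subset by (auto simp: algebra_simps)

lemma F_restrict_eq:
  assumes U: "U \<in> carrier (G\<lparr>carrier := S\<rparr> Mod A)" and V: "V \<in> carrier (G\<lparr>carrier := S\<rparr> Mod A)"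
  defines "g \<equiv> transv U \<otimes> transv V \<otimes> inv (transv (U <#> V))"
  shows "F U V = c (transv U) + c (transv V) - c g - c (transv (U <#> V))"
proof -
  let ?Q = "G\<lparr>carrier := S\<rparr> Mod A"
  define \<sigma> \<tau> \<rho> where "\<sigma> = transv U" and "\<tau> = transv V" and "\<rho> = transv (U <#> V)"
  have UV: "U <#> V \<in> carrier ?Q"
    using monoid.m_closed[OF group.is_monoid[OF group_Mod_restrict[OF S A_subset]] U V] by simp
  have QG: "carrier ?Q \<subseteq> carrier (G Mod A)"
    using subgroup.subset[OF subgroup_Mod_restrict[OF S A_subset]] .
  have inS: "\<sigma> \<in> S" "\<tau> \<in> S" "\<rho> \<in> S"
    using transv_Mod_restrict[OF S A_subset] U V UV unfolding \<sigma>_def \<tau>_def \<rho>_def by auto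
  then have inG: "\<sigma> \<in> carrier G" "\<tau> \<in> carrier G" "\<rho> \<in> carrier G"
    using subgroup.subset[OF S] by auto
  have gA: "g \<in> A" unfolding g_def using transv_factor_in_A U V QG by blast
  then have gG: "g \<in> carrier G" and gS: "g \<in> S" using A_carrier A_subset by auto
  have "U \<in> carrier (G Mod A)" "V \<in> carrier (G Mod A)" using U V QG by auto
  from transv_mult_eq[OF this] have \<rho>g: "\<rho> \<otimes> g = \<sigma> \<otimes> \<tau>"
    unfolding g_def \<sigma>_def \<tau>_def \<rho>_def by simp
  have c1: "c \<one> = 0" using c_additive_A[OF A_one_closed A_one_closed] by simp
  have corr_\<sigma>\<tau>: "corr \<sigma> = 0" "corr \<tau> = 0"
    using corr_transv U V QG f0_S[OF inS(1) subgroup.one_closed[OF S]] f0_S[OF inS(2) subgroup.one_closed[OF S]]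
      c1 inG unfolding \<sigma>_def \<tau>_def \<rho>_def by auto
  have "A #> (\<sigma> \<otimes> \<tau>) = U <#> V"
    using rcos_mult[OF inG(1,2)] transv_Mod_restrict(2)[OF S A_subset U]
      transv_Mod_restrict(2)[OF S A_subset V] unfolding \<sigma>_def \<tau>_def by simp
  then have "transv (A #> (\<sigma> \<otimes> \<tau>)) = \<rho>" unfolding \<rho>_def by simp
  moreover have "inv \<rho> \<otimes> (\<sigma> \<otimes> \<tau>) = g" using \<rho>g[symmetric] inG gG by simp
  ultimately have "corr (\<sigma> \<otimes> \<tau>) = - f0 \<rho> g" unfolding corr_def by simp
  also have "\<dots> = - (c g - c (\<sigma> \<otimes> \<tau>) + c \<rho>)" using f0_S[OF inS(3) gS] \<rho>g by simp
  finally have corr_\<rho>: "corr (\<sigma> \<otimes> \<tau>) = - (c g - c (\<sigma> \<otimes> \<tau>) + c \<rho>)" .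
  have "F U V = f1 \<sigma> \<tau>" unfolding F_def \<sigma>_def \<tau>_def \<rho>_def using U V QG by auto
  also have "\<dots> = f0 \<sigma> \<tau> - (corr \<tau> - corr (\<sigma> \<otimes> \<tau>) + corr \<sigma>)"
    unfolding f1_def minus_cobound_def using inG by simp
  also have "\<dots> = c \<sigma> + c \<tau> - c g - c \<rho>"
    using f0_S[OF inS(1,2)] corr_\<sigma>\<tau> corr_\<rho> by (simp add: algebra_simps)
  finally show ?thesis unfolding \<sigma>_def \<tau>_def \<rho>_def .
qed

lemma tra_cochain_Mod_restrict:
  assumes \<chi>_mult: "\<And>x y. x \<in> S \<Longrightarrow> y \<in> S \<Longrightarrow> \<chi> (x \<otimes> y) = \<chi> x + \<chi> y"
    and \<chi>_A: "\<And>a. a \<in> A \<Longrightarrow> \<chi> a = \<psi> a + c a"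
    and U: "U \<in> carrier (G\<lparr>carrier := S\<rparr> Mod A)" and V: "V \<in> carrier (G\<lparr>carrier := S\<rparr> Mod A)"
  defines "e W \<equiv> \<chi> (transv W) - c (transv W)"
  shows "tra_cochain \<psi> U V = F U V + e U + e V - e (U <#> V)"
proof -
  define g where "g = transv U \<otimes> transv V \<otimes> inv (transv (U <#> V))"
  have UV: "U <#> V \<in> carrier (G\<lparr>carrier := S\<rparr> Mod A)"
    using monoid.m_closed[OF group.is_monoid[OF group_Mod_restrict[OF S A_subset]] U V] by simp
  have Q: "U \<in> carrier (G Mod A)" "V \<in> carrier (G Mod A)"
    using U V subgroup.subset[OF subgroup_Mod_restrict[OF S A_subset]] by auto
  have gA: "g \<in> A" unfolding g_def using transv_factor_in_A[OF Q] .
  have inS: "transv U \<in> S" "transv V \<in> S" "transv (U <#> V) \<in> S"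
    using transv_Mod_restrict(1)[OF S A_subset] U V UV by auto
  from transv_mult_eq[OF Q] have "transv U \<otimes> transv V = transv (U <#> V) \<otimes> g"
    unfolding g_def by simp
  then have "\<chi> (transv U) + \<chi> (transv V) = \<chi> (transv (U <#> V)) + \<psi> g + c g"
    using \<chi>_mult inS gA A_subset \<chi>_A by (metis add.assoc subsetD)
  then have tra: "tra_cochain \<psi> U V = \<chi> (transv U) + \<chi> (transv V) - \<chi> (transv (U <#> V)) - c g"
    unfolding tra_cochain_def g_def[symmetric] by (simp add: algebra_simps)
  have F: "F U V = c (transv U) + c (transv V) - c g - c (transv (U <#> V))"
    unfolding g_def using F_restrict_eq U V by blast
  show ?thesis unfolding e_def tra F by (simp add: algebra_simps)
qed

lemma res2_F_in_tra_image:
  assumes divisible: "divisible_ab TYPE('d)"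
  shows "res2 (G\<lparr>carrier := S\<rparr> Mod A) (cls (G Mod A) F) \<in> tra_res_image (G\<lparr>carrier := S\<rparr>) A"
proof -
  let ?GS = "G\<lparr>carrier := S\<rparr>"
  let ?Q = "G\<lparr>carrier := S\<rparr> Mod A"
  let ?T = "carrier ?Q"
  define \<phi> where "\<phi> a = - c a" for a
  have \<phi>: "addhom G A \<phi>" unfolding \<phi>_def addhom_def using c_additive_A by simp
  then obtain \<psi> where \<psi>: "addhom G A \<psi>" and \<psi>_\<phi>: "\<forall>a \<in> A \<inter> derived G S. \<psi> a = \<phi> a"
    and tra_res: "tra_res ?GS A \<phi> = tra ?GS A \<psi>"
    using tra_res_eq_tra[of ?GS A \<phi> \<phi>] derived_consistent[OF _ S] by auto
  txt \<open>The hypothesis on f0 makes \<psi> + c vanish on A \<inter> [S,S], so it extends to S.\<close>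
  obtain \<chi> where \<chi>_mult: "\<And>x y. x \<in> S \<Longrightarrow> y \<in> S \<Longrightarrow> \<chi> (x \<otimes> y) = \<chi> x + \<chi> y"
    and \<chi>_A: "\<And>a. a \<in> A \<Longrightarrow> \<chi> a = \<psi> a + c a"
    by (rule divisible_hom_extension[OF divisible S subgroup_A A_subset, where \<beta> = "\<lambda>a. \<psi> a + c a"])
      (use \<psi> \<psi>_\<phi> c_additive_A in \<open>auto simp: addhom_def \<phi>_def\<close>)
  define e where "e U = \<chi> (transv U) - c (transv U)" for U
  have F_cocycle: "restr ?T F \<in> cocycles2 ?Q"
    by (rule restr_in_cocycles2_Mod_restrict[OF S A_subset F_in_cocycles2])
  have tra_eq: "restr ?T (tra_cochain \<psi>) = minus_cobound ?Q (restr ?T F) (\<lambda>U. - e U)"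
    using tra_cochain_Mod_restrict[OF \<chi>_mult \<chi>_A] unfolding e_def restr_def minus_cobound_def
    by (auto intro!: ext simp: algebra_simps monoid.m_closed[OF group.is_monoid[OF group_Mod_restrict[OF S A_subset]]])
  have "res2 ?Q (cls (G Mod A) F) = cls ?Q (restr ?T F)"
    by (rule res2_Mod_restrict_eq[OF S A_subset cls_in_H2 cls_self]) (rule F_in_cocycles2)+
  also have "\<dots> = cls ?Q (restr ?T (tra_cochain \<psi>))"
    unfolding tra_eq
    by (rule cls_eqI[OF monoid.cohom_rel_minus_cobound[OF group.is_monoid[OF group_Mod_restrict[OF S A_subset]] F_cocycle]])
  also have "\<dots> = tra_res ?GS A \<phi>"
    unfolding tra_res tra_restrict_eq[OF S A_subset] ..
  finally have "res2 ?Q (cls (G Mod A) F) = tra_res ?GS A \<phi>" .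
  moreover have "addhom ?GS (A \<inter> derived ?GS (carrier ?GS)) \<phi>"
    using \<phi> unfolding addhom_def by simp
  ultimately show ?thesis
    unfolding tra_res_image_def by blast
qed

end

end

lemma nu_eq:
  assumes "\<xi> \<in> H2 G" "f \<in> \<xi>" "H \<subseteq> carrier G" "K \<subseteq> carrier G"
    and "\<And>h k. h \<in> H \<Longrightarrow> k \<in> K \<Longrightarrow> h \<otimes>\<^bsub>G\<^esub> k = k \<otimes>\<^bsub>G\<^esub> h"
  shows "nu H K \<xi> = (\<lambda>h k. if h \<in> H \<and> k \<in> K then f h k - f k h else 0)"
proof -
  have "(rep \<xi>, f) \<in> cohom_rel G" using assms(1,2) H2_rep(1) H2_mem_cohom_rel by blast
  then show ?thesis
    unfolding nu_def using cohom_rel_commuting_antisym assms(3-5) by (fastforce intro!: ext)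
qed

lemma (in central_subgroup) commutator_pairing_mult:
  assumes f: "f \<in> cocycles2 G" and a: "a \<in> A" and x: "x \<in> carrier G" and y: "y \<in> carrier G"
  shows "f a (x \<otimes> y) - f (x \<otimes> y) a = (f a x - f x a) + (f a y - f y a)"
proof -
  have aG: "a \<in> carrier G" using A_carrier a .
  have E1: "f a x + f (x \<otimes> a) y - f x y - f a (x \<otimes> y) = 0"
    using cocycles2D[OF f aG x y] central[OF a x] by (simp add: algebra_simps)
  have E2: "f x a + f (x \<otimes> a) y - f a y - f x (a \<otimes> y) = 0"
    using cocycles2D[OF f x aG y] by (simp add: algebra_simps)
  have E3: "f x y + f (x \<otimes> y) a - f y a - f x (a \<otimes> y) = 0"
    using cocycles2D[OF f x y aG] central[OF a y] by (simp add: algebra_simps)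
  have "f a (x \<otimes> y) - f (x \<otimes> y) a - ((f a x - f x a) + (f a y - f y a))
     = - (f a x + f (x \<otimes> a) y - f x y - f a (x \<otimes> y))
       + (f x a + f (x \<otimes> a) y - f a y - f x (a \<otimes> y))
       - (f x y + f (x \<otimes> y) a - f y a - f x (a \<otimes> y))"
    by (simp add: algebra_simps)
  then show ?thesis using E1 E2 E3 by simp
qed

locale central_product = group G for G (structure) +
  fixes H K :: "'a set"
  assumes normal_H: "H \<lhd> G" and normal_K: "K \<lhd> G" and HK: "H <#> K = carrier G"
    and commute: "\<And>h k. h \<in> H \<Longrightarrow> k \<in> K \<Longrightarrow> h \<otimes> k = k \<otimes> h"
begin

lemma subgroup_H: "subgroup H G" and subgroup_K: "subgroup K G"
  using normal_H normal_K normal_imp_subgroup by blast+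

lemma H_carrier: "H \<subseteq> carrier G" and K_carrier: "K \<subseteq> carrier G"
  using subgroup_H subgroup_K subgroup.subset by blast+

lemma mult_decomp:
  assumes "x \<in> carrier G"
  obtains h k where "h \<in> H" "k \<in> K" "x = h \<otimes> k"
  using assms HK[symmetric] unfolding set_mult_def by blast

lemma central_intersection:
  assumes a: "a \<in> H \<inter> K" and x: "x \<in> carrier G"
  shows "a \<otimes> x = x \<otimes> a"
proof -
  obtain h k where hk: "h \<in> H" "k \<in> K" "x = h \<otimes> k" using mult_decomp[OF x] .
  have G: "a \<in> carrier G" "h \<in> carrier G" "k \<in> carrier G" using a hk H_carrier K_carrier by auto
  have "a \<otimes> x = (a \<otimes> h) \<otimes> k" using hk G by (simp add: m_assoc)
  also have "\<dots> = (h \<otimes> a) \<otimes> k" using commute[of h a] hk a by simp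
  also have "\<dots> = h \<otimes> (a \<otimes> k)" using G by (simp add: m_assoc)
  also have "\<dots> = h \<otimes> (k \<otimes> a)" using commute[of a k] hk a by simp
  also have "\<dots> = x \<otimes> a" using hk G by (simp add: m_assoc)
  finally show ?thesis .
qed

sublocale central_subgroup G "H \<inter> K"
  by (rule central_subgroup.intro[OF is_group central_subgroup_axioms.intro,
        OF normal_subgroup_intersect[OF normal_H normal_K] central_intersection])

lemma Mod_factors_commute:
  assumes "U \<in> carrier (G\<lparr>carrier := H\<rparr> Mod (H \<inter> K))" "V \<in> carrier (G\<lparr>carrier := K\<rparr> Mod (H \<inter> K))"
  shows "U \<otimes>\<^bsub>G Mod (H \<inter> K)\<^esub> V = V \<otimes>\<^bsub>G Mod (H \<inter> K)\<^esub> U"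
proof -
  obtain h k where "h \<in> H" "k \<in> K" "U = (H \<inter> K) #> h" "V = (H \<inter> K) #> k"
    using assms carrier_Mod_restrict by auto
  moreover have "h \<in> carrier G" "k \<in> carrier G"
    using \<open>h \<in> H\<close> \<open>k \<in> K\<close> H_carrier K_carrier by auto
  ultimately show ?thesis using rcos_mult commute[of h k] by simp
qed

text \<open>A cocycle that is a coboundary on H and on K has symmetric values on the centre H \<inter> K,
  because its commutator pairing with a central element is additive.\<close>
lemma cocycle_symmetric_on_intersection:
  assumes f: "f \<in> cocycles2 G"
    and fH: "\<And>x y. x \<in> H \<Longrightarrow> y \<in> H \<Longrightarrow> f x y = 0"
    and fK: "\<And>x y. x \<in> K \<Longrightarrow> y \<in> K \<Longrightarrow> f x y = c y - c (x \<otimes> y) + c x"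
    and a: "a \<in> H \<inter> K" and x: "x \<in> carrier G"
  shows "f a x = f x a"
proof -
  obtain h k where hk: "h \<in> H" "k \<in> K" "x = h \<otimes> k" using mult_decomp[OF x] .
  have "f a x - f x a = (f a h - f h a) + (f a k - f k a)"
    using commutator_pairing_mult[OF f a, of h k] hk H_carrier K_carrier by auto
  moreover have "f a h - f h a = 0" using fH a hk by simp
  moreover have "f a k - f k a = 0" using fK[of a k] fK[of k a] a hk commute[of a k] by simp
  ultimately show ?thesis by simp
qed

lemma ker_theta3_representative:
  fixes \<xi> :: "('a \<Rightarrow> 'a \<Rightarrow> 'd::ab_group_add) set"
  assumes \<xi>: "\<xi> \<in> H2 G"
    and ker: "theta3 (G\<lparr>carrier := H\<rparr>) (G\<lparr>carrier := K\<rparr>) \<xi>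
              = (cls (G\<lparr>carrier := H\<rparr>) (\<lambda>_ _. 0), cls (G\<lparr>carrier := K\<rparr>) (\<lambda>_ _. 0), (\<lambda>_ _. 0))"
  obtains f0 c where "f0 \<in> \<xi>" "\<And>x y. x \<in> H \<Longrightarrow> y \<in> H \<Longrightarrow> f0 x y = 0"
    "\<And>x y. x \<in> K \<Longrightarrow> y \<in> K \<Longrightarrow> f0 x y = c y - c (x \<otimes> y) + c x"
    "\<And>h k. h \<in> H \<Longrightarrow> k \<in> K \<Longrightarrow> f0 h k = f0 k h"
proof -
  define f where "f = rep \<xi>"
  have f: "f \<in> cocycles2 G" "f \<in> \<xi>" using H2_rep[OF \<xi>] unfolding f_def by auto
  obtain c1 where c1: "\<And>x y. x \<in> H \<Longrightarrow> y \<in> H \<Longrightarrow> f x y = c1 y - c1 (x \<otimes> y) + c1 x"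
    using ker res2_eq_zero_iff[OF \<xi> f(2) subgroup_H] unfolding theta3_def by auto
  obtain c2 where c2: "\<And>x y. x \<in> K \<Longrightarrow> y \<in> K \<Longrightarrow> f x y = c2 y - c2 (x \<otimes> y) + c2 x"
    using ker res2_eq_zero_iff[OF \<xi> f(2) subgroup_K] unfolding theta3_def by auto
  have f_sym: "f h k = f k h" if "h \<in> H" "k \<in> K" for h k
  proof -
    have "nu H K \<xi> h k = 0" using ker unfolding theta3_def by simp
    then show ?thesis using that unfolding nu_def f_def by simp
  qed
  show ?thesis
  proof (rule that[of "minus_cobound G f c1" "\<lambda>z. c2 z - c1 z"])
    have "cls G (minus_cobound G f c1) = \<xi>"
      using cls_eqI[OF cohom_rel_minus_cobound[OF f(1)]] H2_cls_eq[OF \<xi> f(2)] by simp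
    then show "minus_cobound G f c1 \<in> \<xi>"
      using cls_self[OF minus_cobound_in_cocycles2[OF f(1), of c1]] by simp
    show "minus_cobound G f c1 x y = 0" if "x \<in> H" "y \<in> H" for x y
      using that c1 H_carrier unfolding minus_cobound_def by auto
    show "minus_cobound G f c1 x y = (c2 y - c1 y) - (c2 (x \<otimes> y) - c1 (x \<otimes> y)) + (c2 x - c1 x)"
      if "x \<in> K" "y \<in> K" for x y
      using that c2 K_carrier unfolding minus_cobound_def by (auto simp: algebra_simps)
    show "minus_cobound G f c1 h k = minus_cobound G f c1 k h" if "h \<in> H" "k \<in> K" for h k
      using minus_cobound_commuting_antisym[of h G k f c1] f_sym[OF that] commute[OF that]
        that H_carrier K_carrier by auto
  qed
qed

lemma ker_theta3_eq_infl:
  fixes \<xi> :: "('a \<Rightarrow> 'a \<Rightarrow> 'd::ab_group_add) set"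
  assumes divisible: "divisible_ab TYPE('d)" and \<xi>: "\<xi> \<in> H2 G"
    and ker: "theta3 (G\<lparr>carrier := H\<rparr>) (G\<lparr>carrier := K\<rparr>) \<xi>
              = (cls (G\<lparr>carrier := H\<rparr>) (\<lambda>_ _. 0), cls (G\<lparr>carrier := K\<rparr>) (\<lambda>_ _. 0), (\<lambda>_ _. 0))"
  obtains \<eta> where "\<eta> \<in> H2 (G Mod (H \<inter> K))" "infl G (H \<inter> K) \<eta> = \<xi>"
    "res2 (G\<lparr>carrier := H\<rparr> Mod (H \<inter> K)) \<eta> \<in> tra_res_image (G\<lparr>carrier := H\<rparr>) (H \<inter> K)"
    "res2 (G\<lparr>carrier := K\<rparr> Mod (H \<inter> K)) \<eta> \<in> tra_res_image (G\<lparr>carrier := K\<rparr>) (H \<inter> K)"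
    "nu (carrier (G\<lparr>carrier := H\<rparr> Mod (H \<inter> K))) (carrier (G\<lparr>carrier := K\<rparr> Mod (H \<inter> K))) \<eta>
       = (\<lambda>_ _. 0)"
proof -
  obtain f0 c where f0: "f0 \<in> \<xi>" and f0_H: "\<And>x y. x \<in> H \<Longrightarrow> y \<in> H \<Longrightarrow> f0 x y = 0"
    and f0_K: "\<And>x y. x \<in> K \<Longrightarrow> y \<in> K \<Longrightarrow> f0 x y = c y - c (x \<otimes> y) + c x"
    and f0_sym: "\<And>h k. h \<in> H \<Longrightarrow> k \<in> K \<Longrightarrow> f0 h k = f0 k h"
    using ker_theta3_representative[OF \<xi> ker] by blast
  have f0_cocycle: "f0 \<in> cocycles2 G" by (rule H2_mem_cocycles2[OF \<xi> f0])
  interpret d: cocycle_descent G "H \<inter> K" f0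
    using f0_cocycle f0_H cocycle_symmetric_on_intersection[OF f0_cocycle f0_H f0_K]
    by unfold_locales auto
  have sub: "carrier (G\<lparr>carrier := S\<rparr> Mod (H \<inter> K)) \<subseteq> carrier (G Mod (H \<inter> K))"
    if "subgroup S G" "H \<inter> K \<subseteq> S" for S
    using subgroup.subset[OF subgroup_Mod_restrict[OF that]] .
  show ?thesis
  proof (rule that)
    show \<eta>: "cls (G Mod (H \<inter> K)) d.F \<in> H2 (G Mod (H \<inter> K))"
      by (rule cls_in_H2[OF d.F_in_cocycles2])
    show "infl G (H \<inter> K) (cls (G Mod (H \<inter> K)) d.F) = \<xi>"
      using d.infl_cls_F H2_cls_eq[OF \<xi> f0] by simp
    show "res2 (G\<lparr>carrier := H\<rparr> Mod (H \<inter> K)) (cls (G Mod (H \<inter> K)) d.F)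
        \<in> tra_res_image (G\<lparr>carrier := H\<rparr>) (H \<inter> K)"
      by (rule d.res2_F_in_tra_image[OF subgroup_H _ _ divisible, where c = "\<lambda>_. 0"]) (auto simp: f0_H)
    show "res2 (G\<lparr>carrier := K\<rparr> Mod (H \<inter> K)) (cls (G Mod (H \<inter> K)) d.F)
        \<in> tra_res_image (G\<lparr>carrier := K\<rparr>) (H \<inter> K)"
      by (rule d.res2_F_in_tra_image[OF subgroup_K _ f0_K divisible]) auto
    have "d.F U V = d.F V U"
      if U: "U \<in> carrier (G\<lparr>carrier := H\<rparr> Mod (H \<inter> K))" and V: "V \<in> carrier (G\<lparr>carrier := K\<rparr> Mod (H \<inter> K))"
      for U V
    proof -
      have hk: "transv U \<in> H" "transv V \<in> K"
        using transv_Mod_restrict(1)[OF subgroup_H _ U] transv_Mod_restrict(1)[OF subgroup_K _ V] by auto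
      then have G: "transv U \<in> carrier G" "transv V \<in> carrier G" using H_carrier K_carrier by auto
      have "d.F U V - d.F V U = d.f1 (transv U) (transv V) - d.f1 (transv V) (transv U)"
        unfolding d.F_def using U V sub[OF subgroup_H] sub[OF subgroup_K] by auto
      also have "\<dots> = f0 (transv U) (transv V) - f0 (transv V) (transv U)"
        unfolding d.f1_def by (rule minus_cobound_commuting_antisym[OF G commute[OF hk]])
      finally show ?thesis using f0_sym[OF hk] by simp
    qed
    then show "nu (carrier (G\<lparr>carrier := H\<rparr> Mod (H \<inter> K))) (carrier (G\<lparr>carrier := K\<rparr> Mod (H \<inter> K)))
        (cls (G Mod (H \<inter> K)) d.F) = (\<lambda>_ _. 0)"
      using nu_eq[OF \<eta> cls_self[OF d.F_in_cocycles2] sub[OF subgroup_H] sub[OF subgroup_K] Mod_factors_commute]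
      by (auto intro!: ext)
  qed
qed

lemma theta3_infl_eq_zero:
  fixes \<eta> :: "('a set \<Rightarrow> 'a set \<Rightarrow> 'd::ab_group_add) set"
  assumes divisible: "divisible_ab TYPE('d)" and \<eta>: "\<eta> \<in> H2 (G Mod (H \<inter> K))"
    and tra_H: "res2 (G\<lparr>carrier := H\<rparr> Mod (H \<inter> K)) \<eta> \<in> tra_res_image (G\<lparr>carrier := H\<rparr>) (H \<inter> K)"
    and tra_K: "res2 (G\<lparr>carrier := K\<rparr> Mod (H \<inter> K)) \<eta> \<in> tra_res_image (G\<lparr>carrier := K\<rparr>) (H \<inter> K)"
    and nu_\<eta>: "nu (carrier (G\<lparr>carrier := H\<rparr> Mod (H \<inter> K))) (carrier (G\<lparr>carrier := K\<rparr> Mod (H \<inter> K))) \<eta>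
       = (\<lambda>_ _. 0)"
  shows "theta3 (G\<lparr>carrier := H\<rparr>) (G\<lparr>carrier := K\<rparr>) (infl G (H \<inter> K) \<eta>)
    = (cls (G\<lparr>carrier := H\<rparr>) (\<lambda>_ _. 0), cls (G\<lparr>carrier := K\<rparr>) (\<lambda>_ _. 0), (\<lambda>_ _. 0))"
proof -
  let ?f = "pullback2 G (\<lambda>x. (H \<inter> K) #> x) (rep \<eta>)"
  have f: "?f \<in> cocycles2 G" by (rule pullback2_in_cocycles2[OF r_coset_hom H2_rep(2)[OF \<eta>]])
  have infl: "infl G (H \<inter> K) \<eta> = cls G ?f"
    by (rule normal.infl_eq_cls_pullback2[OF normal_A \<eta> H2_rep(1)[OF \<eta>]])
  have "?f h k - ?f k h = 0" if "h \<in> H" "k \<in> K" for h k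
  proof -
    have "(H \<inter> K) #> h \<in> carrier (G\<lparr>carrier := H\<rparr> Mod (H \<inter> K))"
      "(H \<inter> K) #> k \<in> carrier (G\<lparr>carrier := K\<rparr> Mod (H \<inter> K))"
      using that carrier_Mod_restrict by auto
    then have "rep \<eta> ((H \<inter> K) #> h) ((H \<inter> K) #> k) - rep \<eta> ((H \<inter> K) #> k) ((H \<inter> K) #> h) = 0"
      using fun_cong[OF fun_cong[OF nu_\<eta>, of "(H \<inter> K) #> h"], of "(H \<inter> K) #> k"] unfolding nu_def by simp
    then show ?thesis
      using that H_carrier K_carrier unfolding pullback2_def by auto
  qed
  then have "nu H K (infl G (H \<inter> K) \<eta>) = (\<lambda>_ _. 0)"
    unfolding infl using nu_eq[OF cls_in_H2[OF f] cls_self[OF f] H_carrier K_carrier commute]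
    by (auto intro!: ext)
  then show ?thesis
    unfolding theta3_def
    using res2_infl_eq_zero[OF subgroup_H _ divisible \<eta> tra_H] res2_infl_eq_zero[OF subgroup_K _ divisible \<eta> tra_K]
    by auto
qed

end

theorem lemma3p2:
  fixes G :: "('a,'m) monoid_scheme" and H K :: "'a set"
  assumes "group G"
    and "H \<lhd> G" and "K \<lhd> G"
    and "H <#>\<^bsub>G\<^esub> K = carrier G"
    and "\<forall>h\<in>H. \<forall>k\<in>K. h \<otimes>\<^bsub>G\<^esub> k = k \<otimes>\<^bsub>G\<^esub> h"
    and "divisible_ab TYPE('d::ab_group_add)"
  shows "{\<xi> \<in> (H2 G :: ('a \<Rightarrow> 'a \<Rightarrow> 'd) set set).
            theta3 (G\<lparr>carrier := H\<rparr>) (G\<lparr>carrier := K\<rparr>) \<xi>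
              = (cls (G\<lparr>carrier := H\<rparr>) (\<lambda>_ _. 0), cls (G\<lparr>carrier := K\<rparr>) (\<lambda>_ _. 0), (\<lambda>_ _. 0))}
       = infl G (H \<inter> K) `
           {\<eta> \<in> H2 (G Mod (H \<inter> K)).
              \<exists>x \<in> tra_res_image (G\<lparr>carrier := H\<rparr>) (H \<inter> K).
              \<exists>y \<in> tra_res_image (G\<lparr>carrier := K\<rparr>) (H \<inter> K).
                theta3 (G\<lparr>carrier := H\<rparr> Mod (H \<inter> K)) (G\<lparr>carrier := K\<rparr> Mod (H \<inter> K)) \<eta>
                  = (x, y, (\<lambda>_ _. 0))}"
proof -
  interpret central_product G H K
    by (rule central_product.intro[OF assms(1) central_product_axioms.intro]) (use assms(2-5) in auto)
  show ?thesis (is "?ker = infl G (H \<inter> K) ` ?E")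
  proof (intro equalityI subsetI)
    fix \<xi> assume "\<xi> \<in> ?ker"
    then have "\<xi> \<in> H2 G" "theta3 (G\<lparr>carrier := H\<rparr>) (G\<lparr>carrier := K\<rparr>) \<xi>
              = (cls (G\<lparr>carrier := H\<rparr>) (\<lambda>_ _. 0), cls (G\<lparr>carrier := K\<rparr>) (\<lambda>_ _. 0), (\<lambda>_ _. 0))"
      by auto
    then obtain \<eta> where "\<eta> \<in> H2 (G Mod (H \<inter> K))" "infl G (H \<inter> K) \<eta> = \<xi>"
      "res2 (G\<lparr>carrier := H\<rparr> Mod (H \<inter> K)) \<eta> \<in> tra_res_image (G\<lparr>carrier := H\<rparr>) (H \<inter> K)"
      "res2 (G\<lparr>carrier := K\<rparr> Mod (H \<inter> K)) \<eta> \<in> tra_res_image (G\<lparr>carrier := K\<rparr>) (H \<inter> K)"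
      "nu (carrier (G\<lparr>carrier := H\<rparr> Mod (H \<inter> K))) (carrier (G\<lparr>carrier := K\<rparr> Mod (H \<inter> K))) \<eta>
         = (\<lambda>_ _. 0)"
      by (rule ker_theta3_eq_infl[OF assms(6)])
    then show "\<xi> \<in> infl G (H \<inter> K) ` ?E"
      unfolding theta3_def by blast
  qed (use theta3_infl_eq_zero[OF assms(6)] normal.infl_in_H2[OF normal_A] in \<open>auto simp: theta3_def\<close>)
qed

end
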